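(* Let $k\ge l\ge0$ and $H\in\mathcal{H}_{k,l}(\mathbb{R}^{2m},\mathbb{C})$. For all integers $i,j\ge0$, $$S_x^jC^iS_u^jH=j!\,(k-l-j+1)^{(j)}\,\frac{(l+\frac m2-1)^{(j)}}{(l+i+\frac m2-1)^{(j)}}\,C^iH.$$
   Context: Fix an integer $m>4$. For $x,u\in\mathbb{R}^m$ let $\mathcal{P}_{p,q}(\mathbb{R}^{2m},\mathbb{C})$ be complex polynomials of degree $p$ in $x$ and $q$ in $u$. Write $|x|^2=\sum x_j^2$, $\langle u,x\rangle=\sum u_jx_j$, $\Delta_x=\sum\partial_{x_j}^2$, $\Delta_u=\sum\partial_{u_j}^2$, $\langle\partial_u,\partial_x\rangle=\sum\partial_{u_j}\partial_{x_j}$, $\langle x,\partial_u\rangle=\sum x_j\partial_{u_j}$, $\langle u,\partial_x\rangle=\sum u_j\partial_{x_j}$, $\ker(D_1,\dots,D_r)=\bigcap\ker D_i$. Every $P\in\mathcal{P}_{p,q}$ is uniquely $\sum_{a,b\ge0}|x|^{2a}|u|^{2b}H'_{p-2a,q-2b}$ with $H'_{p-2a,q-2b}\in\mathcal{P}_{p-2a,q-2b}\cap\ker(\Delta_x,\Delta_u)$; $\pi_{\mathfrak{s}}P:=H'_{p,q}$. On $\ker(\Delta_x,\Delta_u)$: $S_x=\pi_{\mathfrak{s}}\langle x,\partial_u\rangle$, $S_u=\pi_{\mathfrak{s}}\langle u,\partial_x\rangle$, $C=\pi_{\mathfrak{s}}\langle u,x\rangle$. For $k\ge l\ge0$, $\mathcal{H}_{k,l}=\mathcal{P}_{k,l}\cap\ker(\Delta_x,\Delta_u,\langle\partial_u,\partial_x\rangle,\langle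 x,\partial_u\rangle)$. Upper factorial: $\alpha^{(j)}=\alpha(\alpha+1)\cdots(\alpha+j-1)$, $\alpha^{(0)}=1$. *)

theory Defs
  imports Complex_Main "HOL-Library.Poly_Mapping"
begin

text \<open>Variables are encoded as Inl j (for x_j) and Inr j (for u_j), j < m.\<close>

type_synonym var = "nat + nat"
type_synonym mono = "var \<Rightarrow>\<^sub>0 nat"
type_synonym cpoly = "mono \<Rightarrow>\<^sub>0 complex"

definition var_idx :: "var \<Rightarrow> nat" where
  "var_idx v = (case v of Inl j \<Rightarrow> j | Inr j \<Rightarrow> j)"

definition pvar :: "var \<Rightarrow> cpoly" where
  "pvar v = Poly_Mapping.single (Poly_Mapping.single v 1) 1"

definition pconst :: "complex \<Rightarrow> cpoly" where
  "pconst c = Poly_Mapping.single 0 c"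

definition pd :: "var \<Rightarrow> cpoly \<Rightarrow> cpoly" where
  "pd v P = (\<Sum>a\<in>Poly_Mapping.keys P.
      Poly_Mapping.single (a - Poly_Mapping.single v 1)
        (of_nat (Poly_Mapping.lookup a v) * Poly_Mapping.lookup P a))"

definition degx :: "nat \<Rightarrow> mono \<Rightarrow> nat" where
  "degx m a = (\<Sum>j<m. Poly_Mapping.lookup a (Inl j))"

definition degu :: "nat \<Rightarrow> mono \<Rightarrow> nat" where
  "degu m a = (\<Sum>j<m. Poly_Mapping.lookup a (Inr j))"

definition Ppq :: "nat \<Rightarrow> nat \<Rightarrow> nat \<Rightarrow> cpoly set" where
  "Ppq m p q = {P. \<forall>a\<in>Poly_Mapping.keys P.
       (\<forall>v\<in>Poly_Mapping.keys a. var_idx v < m) \<and> degx m a = p \<and> degu m a = q}"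

definition normx2 :: "nat \<Rightarrow> cpoly" where
  "normx2 m = (\<Sum>j<m. pvar (Inl j) * pvar (Inl j))"

definition normu2 :: "nat \<Rightarrow> cpoly" where
  "normu2 m = (\<Sum>j<m. pvar (Inr j) * pvar (Inr j))"

definition ux :: "nat \<Rightarrow> cpoly" where
  "ux m = (\<Sum>j<m. pvar (Inr j) * pvar (Inl j))"

definition lap_x :: "nat \<Rightarrow> cpoly \<Rightarrow> cpoly" where
  "lap_x m P = (\<Sum>j<m. pd (Inl j) (pd (Inl j) P))"

definition lap_u :: "nat \<Rightarrow> cpoly \<Rightarrow> cpoly" where
  "lap_u m P = (\<Sum>j<m. pd (Inr j) (pd (Inr j) P))"

definition du_dx :: "nat \<Rightarrow> cpoly \<Rightarrow> cpoly" where
  "du_dx m P = (\<Sum>j<m. pd (Inr j) (pd (Inl j) P))"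

definition x_du :: "nat \<Rightarrow> cpoly \<Rightarrow> cpoly" where
  "x_du m P = (\<Sum>j<m. pvar (Inl j) * pd (Inr j) P)"

definition u_dx :: "nat \<Rightarrow> cpoly \<Rightarrow> cpoly" where
  "u_dx m P = (\<Sum>j<m. pvar (Inr j) * pd (Inl j) P)"

definition Harm :: "nat \<Rightarrow> nat \<Rightarrow> nat \<Rightarrow> cpoly set" where
  "Harm m p q = {P \<in> Ppq m p q. lap_x m P = 0 \<and> lap_u m P = 0}"

definition pi_s :: "nat \<Rightarrow> cpoly \<Rightarrow> cpoly" where
  "pi_s m P = (THE H. \<exists>p q Hs. P \<in> Ppq m p q \<and>
      (\<forall>a\<le>p div 2. \<forall>b\<le>q div 2. Hs a b \<in> Harm m (p - 2*a) (q - 2*b)) \<and>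
      P = (\<Sum>a\<le>p div 2. \<Sum>b\<le>q div 2. normx2 m ^ a * normu2 m ^ b * Hs a b) \<and>
      H = Hs 0 0)"

definition S_x :: "nat \<Rightarrow> cpoly \<Rightarrow> cpoly" where
  "S_x m P = pi_s m (x_du m P)"

definition S_u :: "nat \<Rightarrow> cpoly \<Rightarrow> cpoly" where
  "S_u m P = pi_s m (u_dx m P)"

definition C_op :: "nat \<Rightarrow> cpoly \<Rightarrow> cpoly" where
  "C_op m P = pi_s m (ux m * P)"

definition Hkl :: "nat \<Rightarrow> nat \<Rightarrow> nat \<Rightarrow> cpoly set" where
  "Hkl m k l = {P \<in> Ppq m k l. lap_x m P = 0 \<and> lap_u m P = 0 \<and>
      du_dx m P = 0 \<and> x_du m P = 0}"

end

theory Submission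
  imports Defs
begin

text \<open>
  On harmonics of bidegree (p,q) the three projected operators have closed forms, e.g.
  S_x F = <x,d_u>F - c_p |x|^2 <d_u,d_x>F with c_p = 1/(m+2p-2): the correction makes the result
  harmonic, and it is then the value of pi_s because the harmonic component of a decomposition
  P = sum |x|^2a |u|^2b H_ab is unique, multiplication by |x|^2 and |u|^2 being adjoint to the
  Laplacians for the Fischer inner product. From the closed forms, S_x C = (1 - 2 c_q) C S_x on
  harmonics of u-degree q, so S_x^j passes through C^i at the cost of a telescoping product of
  scalars. On H_{k,l} all correction terms vanish, S_u acts as <u,d_x>, and the sl_2 relation
  [<x,d_u>,<u,d_x>] = E_x - E_u gives S_x <u,d_x>^(a+1) H = (a+1)(k-l-a) <u,d_x>^a H.
\<close>

section \<open>Formal partial derivatives\<close>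

abbreviation unit_mono :: "var \<Rightarrow> mono" where "unit_mono v \<equiv> Poly_Mapping.single v 1"

lemma sum_single_lookup: "(\<Sum>a\<in>Poly_Mapping.keys P. Poly_Mapping.single a (Poly_Mapping.lookup P a)) = (P::cpoly)"
  by (rule poly_mapping_eqI) (simp add: lookup_sum lookup_single when_def in_keys_iff)

lemma lookup_pd: "Poly_Mapping.lookup (pd v P) b = of_nat (Poly_Mapping.lookup b v + 1) * Poly_Mapping.lookup P (b + unit_mono v)"
proof -
  have "Poly_Mapping.lookup (pd v P) b = (\<Sum>a\<in>Poly_Mapping.keys P.
      (if a = b + unit_mono v then of_nat (Poly_Mapping.lookup b v + 1) * Poly_Mapping.lookup P a else 0))"
    unfolding pd_def lookup_sum
  proof (rule sum.cong[OF refl])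
    fix a assume a: "a \<in> Poly_Mapping.keys P"
    show "Poly_Mapping.lookup (Poly_Mapping.single (a - unit_mono v) (of_nat (Poly_Mapping.lookup a v) * Poly_Mapping.lookup P a)) b =
      (if a = b + unit_mono v then of_nat (Poly_Mapping.lookup b v + 1) * Poly_Mapping.lookup P a else 0)"
    proof (cases "Poly_Mapping.lookup a v = 0")
      case True
      have "a \<noteq> b + unit_mono v" using True by (auto simp: lookup_add)
      then show ?thesis using True by (simp add: lookup_single when_def)
    next
      case False
      have "(a - unit_mono v = b) = (a = b + unit_mono v)"
      proof
        assume "a - unit_mono v = b" then show "a = b + unit_mono v"
          using False by (auto intro!: poly_mapping_eqI simp: lookup_add lookup_minus lookup_single when_def)
      next
        assume "a = b + unit_mono v" then show "a - unit_mono v = b"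
          by (auto intro!: poly_mapping_eqI simp: lookup_add lookup_minus lookup_single when_def)
      qed
      then show ?thesis using False
        by (auto simp: lookup_single when_def lookup_add)
    qed
  qed
  also have "\<dots> = of_nat (Poly_Mapping.lookup b v + 1) * Poly_Mapping.lookup P (b + unit_mono v)"
    by (simp add: in_keys_iff)
  finally show ?thesis .
qed

lemma pd_add: "pd v (P + Q) = pd v P + pd v Q"
  by (rule poly_mapping_eqI) (simp add: lookup_pd lookup_add algebra_simps)
lemma pd_minus: "pd v (- P) = - pd v P"
  by (rule poly_mapping_eqI) (simp add: lookup_pd)
lemma pd_zero[simp]: "pd v 0 = 0"
  by (rule poly_mapping_eqI) (simp add: lookup_pd)
lemma pd_sum: "pd v (sum f A) = (\<Sum>i\<in>A. pd v (f i))"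
  by (induction A rule: infinite_finite_induct) (auto simp: pd_add)

lemma pd_single: "pd v (Poly_Mapping.single a c) = Poly_Mapping.single (a - unit_mono v) (of_nat (Poly_Mapping.lookup a v) * c)"
  by (simp add: pd_def)

lemma lookup_pconst_mult: "Poly_Mapping.lookup (pconst c * P) a = c * Poly_Mapping.lookup P a"
proof -
  have "pconst c * P = (\<Sum>b\<in>Poly_Mapping.keys P. Poly_Mapping.single b (c * Poly_Mapping.lookup P b))"
    by (subst (1) sum_single_lookup[symmetric, of P]) (simp add: sum_distrib_left pconst_def mult_single)
  then show ?thesis by (simp add: lookup_sum lookup_single when_def in_keys_iff)
qed

lemma pd_single_mult_single:
  "pd v (Poly_Mapping.single a c * Poly_Mapping.single b d) =
   pd v (Poly_Mapping.single a c) * Poly_Mapping.single b d + Poly_Mapping.single a c * pd v (Poly_Mapping.single b d)"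
proof -
  have e1: "b + (a - Poly_Mapping.single v (Suc 0)) = a + b - Poly_Mapping.single v (Suc 0)" if "Poly_Mapping.lookup a v \<noteq> 0"
    using that by (auto intro!: poly_mapping_eqI simp: lookup_add lookup_minus lookup_single when_def)
  have e2: "a + (b - Poly_Mapping.single v (Suc 0)) = a + b - Poly_Mapping.single v (Suc 0)" if "Poly_Mapping.lookup b v \<noteq> 0"
    using that by (auto intro!: poly_mapping_eqI simp: lookup_add lookup_minus lookup_single when_def)
  have "pd v (Poly_Mapping.single a c * Poly_Mapping.single b d) =
     Poly_Mapping.single (a + b - unit_mono v) (of_nat (Poly_Mapping.lookup a v) * (c * d)) +
     Poly_Mapping.single (a + b - unit_mono v) (of_nat (Poly_Mapping.lookup b v) * (c * d))"
    by (simp add: mult_single pd_single lookup_add single_add[symmetric] algebra_simps)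
  also have "\<dots> = pd v (Poly_Mapping.single a c) * Poly_Mapping.single b d + Poly_Mapping.single a c * pd v (Poly_Mapping.single b d)"
    apply (simp add: pd_single mult_single)
    apply (cases "Poly_Mapping.lookup a v = 0"; cases "Poly_Mapping.lookup b v = 0")
    by (simp_all add: e1 e2 algebra_simps)
  finally show ?thesis .
qed

lemma pd_single_mult:
  "pd v (Poly_Mapping.single a c * Q) = pd v (Poly_Mapping.single a c) * Q + Poly_Mapping.single a c * pd v Q"
proof -
  have "pd v (Poly_Mapping.single a c * Q) = pd v (Poly_Mapping.single a c * (\<Sum>b\<in>Poly_Mapping.keys Q. Poly_Mapping.single b (Poly_Mapping.lookup Q b)))"
    by (simp add: sum_single_lookup)
  also have "\<dots> = pd v (Poly_Mapping.single a c) * (\<Sum>b\<in>Poly_Mapping.keys Q. Poly_Mapping.single b (Poly_Mapping.lookup Q b))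
     + Poly_Mapping.single a c * pd v (\<Sum>b\<in>Poly_Mapping.keys Q. Poly_Mapping.single b (Poly_Mapping.lookup Q b))"
    by (simp add: sum_distrib_left pd_sum pd_single_mult_single sum.distrib)
  finally show ?thesis by (simp add: sum_single_lookup)
qed

lemma pd_mult: "pd v (P * Q) = pd v P * Q + P * pd v Q"
proof -
  have "pd v (P * Q) = pd v ((\<Sum>a\<in>Poly_Mapping.keys P. Poly_Mapping.single a (Poly_Mapping.lookup P a)) * Q)"
    by (simp add: sum_single_lookup)
  also have "\<dots> = pd v (\<Sum>a\<in>Poly_Mapping.keys P. Poly_Mapping.single a (Poly_Mapping.lookup P a)) * Q
     + (\<Sum>a\<in>Poly_Mapping.keys P. Poly_Mapping.single a (Poly_Mapping.lookup P a)) * pd v Q"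
    by (simp add: sum_distrib_right pd_sum pd_single_mult sum.distrib)
  finally show ?thesis by (simp add: sum_single_lookup)
qed

lemma pd_pvar: "pd v (pvar w) = (if v = w then 1 else 0)"
  by (auto simp: pvar_def pd_single lookup_single when_def)

lemma pd_pconst[simp]: "pd v (pconst c) = 0"
  by (simp add: pconst_def pd_single)

lemma pd_one[simp]: "pd v 1 = 0"
  using pd_pconst[of v 1] by (simp add: pconst_def)

lemma pd_pconst_mult: "pd v (pconst c * P) = pconst c * pd v P"
  by (simp add: pd_mult)

lemma pd_commute: "pd v (pd w P) = pd w (pd v P)"
  by (rule poly_mapping_eqI) (simp add: lookup_pd lookup_add algebra_simps lookup_single when_def)

lemma pconst_mult: "pconst (a * b) = pconst a * pconst b"
  by (simp add: pconst_def mult_single)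
lemma pconst_add: "pconst (a + b) = pconst a + pconst b"
  by (simp add: pconst_def single_add)
lemma pconst_diff: "pconst (a - b) = pconst a - pconst b"
  by (simp add: pconst_def single_diff)
lemma pconst_uminus: "pconst (- b) = - pconst b"
  by (simp add: pconst_def single_uminus)
lemma pconst_1[simp]: "pconst 1 = 1"
  by (simp add: pconst_def)
lemma pconst_0[simp]: "pconst 0 = 0"
  by (simp add: pconst_def)
lemma pconst_of_nat: "pconst (of_nat n) = of_nat n"
  by (simp add: pconst_def)
lemma pconst_numeral: "pconst (numeral n) = numeral n"
  by (simp add: pconst_def)

lemma lookup_pvar_mult: "Poly_Mapping.lookup (pvar w * Q) a =
   (if Poly_Mapping.lookup a w = 0 then 0 else Poly_Mapping.lookup Q (a - unit_mono w))"
proof -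
  have "pvar w * Q = (\<Sum>b\<in>Poly_Mapping.keys Q. Poly_Mapping.single (unit_mono w + b) (Poly_Mapping.lookup Q b))"
    by (subst (1) sum_single_lookup[symmetric, of Q]) (simp add: sum_distrib_left pvar_def mult_single)
  moreover have key: "(unit_mono w + b = a) = (b = a - unit_mono w \<and> Poly_Mapping.lookup a w \<noteq> 0)" for b
  proof
    assume h: "unit_mono w + b = a"
    then have "Poly_Mapping.lookup a w \<noteq> 0" by (auto simp: lookup_add)
    moreover have "b = a - unit_mono w" using h by (auto intro!: poly_mapping_eqI simp: lookup_add lookup_minus)
    ultimately show "b = a - unit_mono w \<and> Poly_Mapping.lookup a w \<noteq> 0" by simp
  next
    assume h: "b = a - unit_mono w \<and> Poly_Mapping.lookup a w \<noteq> 0"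
    then show "unit_mono w + b = a"
      by (auto intro!: poly_mapping_eqI simp: lookup_add lookup_minus lookup_single when_def)
  qed
  ultimately have "Poly_Mapping.lookup (pvar w * Q) a = (\<Sum>b\<in>Poly_Mapping.keys Q. if b = a - unit_mono w \<and> Poly_Mapping.lookup a w \<noteq> 0 then Poly_Mapping.lookup Q b else 0)"
    by (simp add: lookup_sum lookup_single when_def)
  also have "\<dots> = (if Poly_Mapping.lookup a w = 0 then 0 else Poly_Mapping.lookup Q (a - unit_mono w))"
    by (auto simp: in_keys_iff)
  finally show ?thesis .
qed

lemma degx_add: "degx m (a + b) = degx m a + degx m b"
  by (simp add: degx_def lookup_add sum.distrib)
lemma degu_add: "degu m (a + b) = degu m a + degu m b"
  by (simp add: degu_def lookup_add sum.distrib)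

lemma deg_unit_mono: "degx m (unit_mono (Inl j)) = (if j < m then 1 else 0)" "degx m (unit_mono (Inr j)) = 0"
  "degu m (unit_mono (Inr j)) = (if j < m then 1 else 0)" "degu m (unit_mono (Inl j)) = 0"
  by (simp_all add: degx_def degu_def lookup_single when_def sum.delta' eq_commute[of "Inl j"] eq_commute[of "Inr j"])

lemma Ppq_zero[simp]: "0 \<in> Ppq m p q"
  by (simp add: Ppq_def)
lemma Ppq_add: "P \<in> Ppq m p q \<Longrightarrow> Q \<in> Ppq m p q \<Longrightarrow> P + Q \<in> Ppq m p q"
  unfolding Ppq_def using keys_add[of P Q] by blast
lemma Ppq_uminus: "P \<in> Ppq m p q \<Longrightarrow> - P \<in> Ppq m p q"
  unfolding Ppq_def by simp
lemma Ppq_diff: "P \<in> Ppq m p q \<Longrightarrow> Q \<in> Ppq m p q \<Longrightarrow> P - Q \<in> Ppq m p q"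
  using Ppq_add[of P m p q "-Q"] Ppq_uminus[of Q] by simp
lemma Ppq_sum: "(\<And>i. i \<in> A \<Longrightarrow> f i \<in> Ppq m p q) \<Longrightarrow> sum f A \<in> Ppq m p q"
  by (induction A rule: infinite_finite_induct) (auto intro: Ppq_add)
lemma Ppq_pconst: "P \<in> Ppq m p q \<Longrightarrow> pconst c * P \<in> Ppq m p q"
  unfolding Ppq_def by (auto simp: in_keys_iff lookup_pconst_mult)
lemma Ppq_mult: "P \<in> Ppq m p q \<Longrightarrow> Q \<in> Ppq m p' q' \<Longrightarrow> P * Q \<in> Ppq m (p + p') (q + q')"
  unfolding Ppq_def
proof (intro CollectI ballI, goal_cases)
  case (1 a)
  then obtain b c where a: "a = b + c" "b \<in> Poly_Mapping.keys P" "c \<in> Poly_Mapping.keys Q"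
    using keys_mult[of P Q] by blast
  then show ?case using 1 keys_add[of b c] by (auto simp: degx_add degu_add)
qed
lemma Ppq_multI: "P \<in> Ppq m p q \<Longrightarrow> Q \<in> Ppq m p' q' \<Longrightarrow> p'' = p + p' \<Longrightarrow> q'' = q + q' \<Longrightarrow> P * Q \<in> Ppq m p'' q''"
  using Ppq_mult by blast
lemma Ppq_one: "1 \<in> Ppq m 0 0"
  by (simp add: Ppq_def degx_def degu_def)
lemma Ppq_power: "P \<in> Ppq m p q \<Longrightarrow> P ^ n \<in> Ppq m (n * p) (n * q)"
  by (induction n) (auto simp: Ppq_one dest: Ppq_mult)
lemma Ppq_pvar_x: "j < m \<Longrightarrow> pvar (Inl j) \<in> Ppq m 1 0"
  by (auto simp: Ppq_def pvar_def degx_def degu_def var_idx_def lookup_single when_def)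
lemma Ppq_pvar_u: "j < m \<Longrightarrow> pvar (Inr j) \<in> Ppq m 0 1"
  by (auto simp: Ppq_def pvar_def degx_def degu_def var_idx_def lookup_single when_def)

lemma keys_subset_add: "Poly_Mapping.keys (b::mono) \<subseteq> Poly_Mapping.keys (b + c)"
  by (auto simp: in_keys_iff lookup_add)

lemma keys_pd: "b \<in> Poly_Mapping.keys (pd v P) \<Longrightarrow> b + unit_mono v \<in> Poly_Mapping.keys P"
  by (auto simp: in_keys_iff lookup_pd)

lemma Ppq_pd_x: assumes "P \<in> Ppq m p q" shows "pd (Inl j) P \<in> Ppq m (p - 1) q"
  unfolding Ppq_def
proof (intro CollectI ballI, goal_cases)
  case (1 b)
  have k: "b + unit_mono (Inl j) \<in> Poly_Mapping.keys P" using keys_pd[OF 1] .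
  have "Inl j \<in> Poly_Mapping.keys (b + unit_mono (Inl j))" by (simp add: in_keys_iff lookup_add)
  then have jm: "j < m" using assms k unfolding Ppq_def by (force simp: var_idx_def)
  have "degx m (b + unit_mono (Inl j)) = degx m b + 1"
    using jm deg_unit_mono[of m j] by (simp add: degx_add)
  moreover have "degu m (b + unit_mono (Inl j)) = degu m b"
    using deg_unit_mono[of m j] by (simp add: degu_add)
  ultimately show ?case using assms k keys_add[of b "unit_mono (Inl j)"] unfolding Ppq_def using keys_subset_add[of b] by fastforce
qed

lemma Ppq_pd_u: assumes "P \<in> Ppq m p q" shows "pd (Inr j) P \<in> Ppq m p (q - 1)"
  unfolding Ppq_def
proof (intro CollectI ballI, goal_cases)
  case (1 b)
  have k: "b + unit_mono (Inr j) \<in> Poly_Mapping.keys P" using keys_pd[OF 1] .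
  have "Inr j \<in> Poly_Mapping.keys (b + unit_mono (Inr j))" by (simp add: in_keys_iff lookup_add)
  then have jm: "j < m" using assms k unfolding Ppq_def by (force simp: var_idx_def)
  have "degu m (b + unit_mono (Inr j)) = degu m b + 1"
    using jm deg_unit_mono[of m j] by (simp add: degu_add)
  moreover have "degx m (b + unit_mono (Inr j)) = degx m b"
    using deg_unit_mono[of m j] by (simp add: degx_add)
  ultimately show ?case using assms k keys_add[of b "unit_mono (Inr j)"] unfolding Ppq_def using keys_subset_add[of b] by fastforce
qed

lemma lookup_pvar_pd: "Poly_Mapping.lookup (pvar w * pd w P) a = of_nat (Poly_Mapping.lookup a w) * Poly_Mapping.lookup P a"
proof (cases "Poly_Mapping.lookup a w = 0")
  case False
  have "a - unit_mono w + unit_mono w = a" using False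
    by (auto intro!: poly_mapping_eqI simp: lookup_add lookup_minus lookup_single when_def)
  moreover have "Poly_Mapping.lookup (a - unit_mono w) w + 1 = Poly_Mapping.lookup a w"
    using False by (simp add: lookup_minus)
  ultimately show ?thesis using False by (simp add: lookup_pvar_mult lookup_pd)
qed (simp add: lookup_pvar_mult)

definition euler_x :: "nat \<Rightarrow> cpoly \<Rightarrow> cpoly" where "euler_x m P = (\<Sum>j<m. pvar (Inl j) * pd (Inl j) P)"
definition euler_u :: "nat \<Rightarrow> cpoly \<Rightarrow> cpoly" where "euler_u m P = (\<Sum>j<m. pvar (Inr j) * pd (Inr j) P)"

lemma euler_x_Ppq: assumes "P \<in> Ppq m p q" shows "euler_x m P = of_nat p * P"
  unfolding euler_x_def
proof (rule poly_mapping_eqI)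
  fix a
  have "Poly_Mapping.lookup (\<Sum>j<m. pvar (Inl j) * pd (Inl j) P) a = of_nat (degx m a) * Poly_Mapping.lookup P a"
    by (simp add: lookup_sum lookup_pvar_pd degx_def sum_distrib_right)
  also have "\<dots> = of_nat p * Poly_Mapping.lookup P a"
    using assms by (cases "a \<in> Poly_Mapping.keys P") (auto simp: Ppq_def in_keys_iff)
  also have "\<dots> = Poly_Mapping.lookup (of_nat p * P) a"
    using lookup_pconst_mult[of "of_nat p" P a] by (simp add: pconst_of_nat)
  finally show "Poly_Mapping.lookup (\<Sum>j<m. pvar (Inl j) * pd (Inl j) P) a = Poly_Mapping.lookup (of_nat p * P) a" .
qed

lemma euler_u_Ppq: assumes "P \<in> Ppq m p q" shows "euler_u m P = of_nat q * P"
  unfolding euler_u_def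
proof (rule poly_mapping_eqI)
  fix a
  have "Poly_Mapping.lookup (\<Sum>j<m. pvar (Inr j) * pd (Inr j) P) a = of_nat (degu m a) * Poly_Mapping.lookup P a"
    by (simp add: lookup_sum lookup_pvar_pd degu_def sum_distrib_right)
  also have "\<dots> = of_nat q * Poly_Mapping.lookup P a"
    using assms by (cases "a \<in> Poly_Mapping.keys P") (auto simp: Ppq_def in_keys_iff)
  also have "\<dots> = Poly_Mapping.lookup (of_nat q * P) a"
    using lookup_pconst_mult[of "of_nat q" P a] by (simp add: pconst_of_nat)
  finally show "Poly_Mapping.lookup (\<Sum>j<m. pvar (Inr j) * pd (Inr j) P) a = Poly_Mapping.lookup (of_nat q * P) a" .
qed

lemmas op_defs = lap_x_def lap_u_def du_dx_def x_du_def u_dx_def euler_x_def euler_u_def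

lemma ops_add:
  "lap_x m (P + Q) = lap_x m P + lap_x m Q" "lap_u m (P + Q) = lap_u m P + lap_u m Q"
  "du_dx m (P + Q) = du_dx m P + du_dx m Q" "x_du m (P + Q) = x_du m P + x_du m Q"
  "u_dx m (P + Q) = u_dx m P + u_dx m Q" "euler_x m (P + Q) = euler_x m P + euler_x m Q" "euler_u m (P + Q) = euler_u m P + euler_u m Q"
  by (simp_all add: op_defs pd_add sum.distrib algebra_simps)

lemma ops_uminus:
  "lap_x m (- P) = - lap_x m P" "lap_u m (- P) = - lap_u m P"
  "du_dx m (- P) = - du_dx m P" "x_du m (- P) = - x_du m P"
  "u_dx m (- P) = - u_dx m P" "euler_x m (- P) = - euler_x m P" "euler_u m (- P) = - euler_u m P"
  by (simp_all add: op_defs pd_minus sum_negf)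

lemma ops_diff:
  "lap_x m (P - Q) = lap_x m P - lap_x m Q" "lap_u m (P - Q) = lap_u m P - lap_u m Q"
  "du_dx m (P - Q) = du_dx m P - du_dx m Q" "x_du m (P - Q) = x_du m P - x_du m Q"
  "u_dx m (P - Q) = u_dx m P - u_dx m Q" "euler_x m (P - Q) = euler_x m P - euler_x m Q" "euler_u m (P - Q) = euler_u m P - euler_u m Q"
  using ops_add[of m P "-Q"] ops_uminus[of m Q] by simp_all

lemma ops_zero[simp]:
  "lap_x m 0 = 0" "lap_u m 0 = 0" "du_dx m 0 = 0" "x_du m 0 = 0" "u_dx m 0 = 0" "euler_x m 0 = 0" "euler_u m 0 = 0"
  by (simp_all add: op_defs)

lemma ops_pconst:
  "lap_x m (pconst c * P) = pconst c * lap_x m P" "lap_u m (pconst c * P) = pconst c * lap_u m P"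
  "du_dx m (pconst c * P) = pconst c * du_dx m P" "x_du m (pconst c * P) = pconst c * x_du m P"
  "u_dx m (pconst c * P) = pconst c * u_dx m P" "euler_x m (pconst c * P) = pconst c * euler_x m P" "euler_u m (pconst c * P) = pconst c * euler_u m P"
  by (simp_all add: op_defs pd_pconst_mult sum_distrib_left mult.left_commute)

lemma ops_sum:
  "lap_x m (sum f A) = (\<Sum>i\<in>A. lap_x m (f i))" "lap_u m (sum f A) = (\<Sum>i\<in>A. lap_u m (f i))"
  "du_dx m (sum f A) = (\<Sum>i\<in>A. du_dx m (f i))" "x_du m (sum f A) = (\<Sum>i\<in>A. x_du m (f i))"
  "u_dx m (sum f A) = (\<Sum>i\<in>A. u_dx m (f i))"
  by (induction A rule: infinite_finite_induct) (simp_all add: ops_add)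

lemma pd_ops:
  "pd v (lap_x m P) = lap_x m (pd v P)" "pd v (lap_u m P) = lap_u m (pd v P)" "pd v (du_dx m P) = du_dx m (pd v P)"
  by (simp_all add: op_defs pd_sum pd_commute[of v])

lemma derivation_mult:
  "x_du m (P * Q) = x_du m P * Q + P * x_du m Q"
  "u_dx m (P * Q) = u_dx m P * Q + P * u_dx m Q"
  "euler_x m (P * Q) = euler_x m P * Q + P * euler_x m Q"
  "euler_u m (P * Q) = euler_u m P * Q + P * euler_u m Q"
  by (simp_all add: op_defs pd_mult sum.distrib algebra_simps sum_distrib_left sum_distrib_right)

definition grad_x :: "nat \<Rightarrow> cpoly \<Rightarrow> cpoly \<Rightarrow> cpoly" where "grad_x m P Q = (\<Sum>j<m. pd (Inl j) P * pd (Inl j) Q)"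
definition grad_u :: "nat \<Rightarrow> cpoly \<Rightarrow> cpoly \<Rightarrow> cpoly" where "grad_u m P Q = (\<Sum>j<m. pd (Inr j) P * pd (Inr j) Q)"
definition grad_xu :: "nat \<Rightarrow> cpoly \<Rightarrow> cpoly \<Rightarrow> cpoly" where "grad_xu m P Q = (\<Sum>j<m. pd (Inr j) P * pd (Inl j) Q + pd (Inl j) P * pd (Inr j) Q)"

lemma lap_mult:
  "lap_x m (P * Q) = lap_x m P * Q + 2 * grad_x m P Q + P * lap_x m Q"
  "lap_u m (P * Q) = lap_u m P * Q + 2 * grad_u m P Q + P * lap_u m Q"
  "du_dx m (P * Q) = du_dx m P * Q + grad_xu m P Q + P * du_dx m Q"
  by (simp_all add: op_defs grad_x_def grad_u_def grad_xu_def pd_mult pd_add sum.distrib algebra_simps sum_distrib_left sum_distrib_right)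

lemma pd_numeral[simp]: "pd v (numeral n) = 0"
  using pd_pconst[of v "numeral n"] by (simp add: pconst_numeral)
lemma pd_of_nat[simp]: "pd v (of_nat n) = 0"
  using pd_pconst[of v "of_nat n"] by (simp add: pconst_of_nat)

lemma pd_pvar_pairs:
  "pd (Inl j) (pvar (Inl i) * pvar (Inl i)) = (if i = j then 2 * pvar (Inl i) else 0)"
  "pd (Inr j) (pvar (Inl i) * pvar (Inl i)) = 0"
  "pd (Inr j) (pvar (Inr i) * pvar (Inr i)) = (if i = j then 2 * pvar (Inr i) else 0)"
  "pd (Inl j) (pvar (Inr i) * pvar (Inr i)) = 0"
  "pd (Inl j) (pvar (Inr i) * pvar (Inl i)) = (if i = j then pvar (Inr i) else 0)"
  "pd (Inr j) (pvar (Inr i) * pvar (Inl i)) = (if i = j then pvar (Inl i) else 0)"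
  by (auto simp: pd_mult pd_pvar)

lemma pd_normx2: "pd (Inl j) (normx2 m) = (if j < m then 2 * pvar (Inl j) else 0)" "pd (Inr j) (normx2 m) = 0"
  by (simp_all add: normx2_def pd_sum pd_pvar_pairs sum.delta' cong: if_cong)
lemma pd_normu2: "pd (Inr j) (normu2 m) = (if j < m then 2 * pvar (Inr j) else 0)" "pd (Inl j) (normu2 m) = 0"
  by (simp_all add: normu2_def pd_sum pd_pvar_pairs sum.delta' cong: if_cong)
lemma pd_ux: "pd (Inl j) (ux m) = (if j < m then pvar (Inr j) else 0)" "pd (Inr j) (ux m) = (if j < m then pvar (Inl j) else 0)"
  by (simp_all add: ux_def pd_sum pd_pvar_pairs sum.delta' cong: if_cong)

lemma lap_quadrics:
  "lap_x m (normx2 m) = 2 * of_nat m" "lap_u m (normx2 m) = 0"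
  "lap_u m (normu2 m) = 2 * of_nat m" "lap_x m (normu2 m) = 0"
  "lap_x m (ux m) = 0" "lap_u m (ux m) = 0" "du_dx m (normx2 m) = 0" "du_dx m (normu2 m) = 0"
  by (simp_all add: lap_x_def lap_u_def du_dx_def pd_normx2 pd_normu2 pd_ux pd_mult pd_pvar)

lemma grad_quadrics:
  "grad_x m (normx2 m) Q = 2 * euler_x m Q" "grad_u m (normx2 m) Q = 0"
  "grad_u m (normu2 m) Q = 2 * euler_u m Q" "grad_x m (normu2 m) Q = 0"
  "grad_x m (ux m) Q = u_dx m Q" "grad_u m (ux m) Q = x_du m Q"
  "grad_xu m (normx2 m) Q = 2 * x_du m Q" "grad_xu m (normu2 m) Q = 2 * u_dx m Q"
  by (simp_all add: grad_x_def grad_u_def grad_xu_def euler_x_def euler_u_def u_dx_def x_du_def pd_normx2 pd_normu2 pd_ux sum_distrib_left mult.assoc)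

lemma derivation_quadrics:
  "x_du m (normx2 m) = 0" "x_du m (normu2 m) = 2 * ux m" "x_du m (ux m) = normx2 m"
  "u_dx m (normu2 m) = 0" "u_dx m (normx2 m) = 2 * ux m" "u_dx m (ux m) = normu2 m"
  "euler_x m (normx2 m) = 2 * normx2 m" "euler_x m (normu2 m) = 0" "euler_x m (ux m) = ux m"
  "euler_u m (normu2 m) = 2 * normu2 m" "euler_u m (normx2 m) = 0" "euler_u m (ux m) = ux m"
  by (simp_all add: x_du_def u_dx_def euler_x_def euler_u_def pd_normx2 pd_normu2 pd_ux;
      simp add: normx2_def normu2_def ux_def sum_distrib_left algebra_simps)+

lemma mult_if_01: "(if c then 1 else 0) * (X::cpoly) = (if c then X else 0)" "X * (if c then 1 else 0) = (if c then X else 0)"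
  "pd v (if c then 1 else 0) = 0"
  by simp_all
lemma sum_lessThan_if_less: "(\<Sum>x<m. if x < m then f x else 0) = sum f {..<m}"
  "(\<Sum>x<m. c * (if x < m then f x else 0)) = (\<Sum>x<m. c * f x)"
  by (rule sum.cong; simp)+

lemma pvar_ops:
  "lap_x m (pvar w) = 0" "lap_u m (pvar w) = 0" "du_dx m (pvar w) = 0"
  "grad_x m (pvar (Inr j)) Q = 0" "grad_u m (pvar (Inl j)) Q = 0"
  "grad_x m (pvar (Inl j)) Q = (if j < m then pd (Inl j) Q else 0)"
  "grad_u m (pvar (Inr j)) Q = (if j < m then pd (Inr j) Q else 0)"
  "grad_xu m (pvar (Inr j)) Q = (if j < m then pd (Inl j) Q else 0)"
  "grad_xu m (pvar (Inl j)) Q = (if j < m then pd (Inr j) Q else 0)"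
  "x_du m (pvar (Inr j)) = (if j < m then pvar (Inl j) else 0)" "x_du m (pvar (Inl j)) = 0"
  "u_dx m (pvar (Inl j)) = (if j < m then pvar (Inr j) else 0)" "u_dx m (pvar (Inr j)) = 0"
  by (simp_all add: op_defs grad_x_def grad_u_def grad_xu_def mult_if_01 pd_pvar sum.delta sum.delta')

lemma lap_x_normx2: "lap_x m (normx2 m * G) = 2 * of_nat m * G + 4 * euler_x m G + normx2 m * lap_x m G"
  by (simp add: lap_mult lap_quadrics grad_quadrics)
lemma lap_u_normx2: "lap_u m (normx2 m * G) = normx2 m * lap_u m G"
  by (simp add: lap_mult lap_quadrics grad_quadrics)
lemma lap_u_normu2: "lap_u m (normu2 m * G) = 2 * of_nat m * G + 4 * euler_u m G + normu2 m * lap_u m G"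
  by (simp add: lap_mult lap_quadrics grad_quadrics)
lemma lap_x_normu2: "lap_x m (normu2 m * G) = normu2 m * lap_x m G"
  by (simp add: lap_mult lap_quadrics grad_quadrics)
lemma lap_x_ux: "lap_x m (ux m * G) = 2 * u_dx m G + ux m * lap_x m G"
  by (simp add: lap_mult lap_quadrics grad_quadrics)
lemma lap_u_ux: "lap_u m (ux m * G) = 2 * x_du m G + ux m * lap_u m G"
  by (simp add: lap_mult lap_quadrics grad_quadrics)
lemma x_du_normx2: "x_du m (normx2 m * G) = normx2 m * x_du m G"
  by (simp add: derivation_mult derivation_quadrics)
lemma x_du_normu2: "x_du m (normu2 m * G) = 2 * ux m * G + normu2 m * x_du m G"
  by (simp add: derivation_mult derivation_quadrics)
lemma x_du_ux: "x_du m (ux m * G) = normx2 m * G + ux m * x_du m G"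
  by (simp add: derivation_mult derivation_quadrics)

lemma lap_x_u_dx: "lap_x m (u_dx m G) = u_dx m (lap_x m G)"
  unfolding u_dx_def[of m G] ops_sum lap_mult
  by (simp add: pvar_ops u_dx_def pd_ops)

lemma lap_u_u_dx: "lap_u m (u_dx m G) = 2 * du_dx m G + u_dx m (lap_u m G)"
  unfolding u_dx_def[of m G] ops_sum lap_mult
  by (simp add: pvar_ops u_dx_def du_dx_def pd_ops sum.distrib sum_distrib_left sum_lessThan_if_less)

lemma lap_x_x_du: "lap_x m (x_du m G) = 2 * du_dx m G + x_du m (lap_x m G)"
  unfolding x_du_def[of m G] ops_sum lap_mult
  by (simp add: pvar_ops x_du_def du_dx_def pd_ops sum.distrib sum_distrib_left pd_commute sum_lessThan_if_less)

lemma lap_u_x_du: "lap_u m (x_du m G) = x_du m (lap_u m G)"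
  unfolding x_du_def[of m G] ops_sum lap_mult
  by (simp add: pvar_ops x_du_def pd_ops)

lemma du_dx_u_dx: "du_dx m (u_dx m G) = lap_x m G + u_dx m (du_dx m G)"
  unfolding u_dx_def[of m G] ops_sum lap_mult
  by (simp add: pvar_ops u_dx_def lap_x_def pd_ops sum.distrib sum_lessThan_if_less)

lemma pd_pd_commute: "pd a (pd b (pd c (pd d G))) = pd c (pd d (pd a (pd b G)))"
  by (metis pd_commute)

lemma ops_commute_lap:
  "du_dx m (lap_x m G) = lap_x m (du_dx m G)" "du_dx m (lap_u m G) = lap_u m (du_dx m G)"
  "lap_x m (lap_u m G) = lap_u m (lap_x m G)"
proof -
  show "du_dx m (lap_x m G) = lap_x m (du_dx m G)"
    unfolding lap_x_def du_dx_def pd_sum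
    by (subst sum.swap) (simp add: pd_pd_commute[of "Inr _" "Inl _"])
  show "du_dx m (lap_u m G) = lap_u m (du_dx m G)"
    unfolding lap_u_def du_dx_def pd_sum
    by (subst sum.swap) (simp add: pd_pd_commute[of "Inr _" "Inl _"])
  show "lap_x m (lap_u m G) = lap_u m (lap_x m G)"
    unfolding lap_u_def lap_x_def pd_sum
    by (subst sum.swap) (simp add: pd_pd_commute[of "Inl _" "Inl _"])
qed

lemma x_du_u_dx: "x_du m (u_dx m G) = euler_x m G - euler_u m G + u_dx m (x_du m G)"
proof -
  have a: "x_du m (u_dx m G) = euler_x m G + (\<Sum>j<m. pvar (Inr j) * x_du m (pd (Inl j) G))"
    unfolding u_dx_def[of m G] ops_sum derivation_mult
    by (simp add: pvar_ops euler_x_def sum.distrib sum_lessThan_if_less)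
  have b: "u_dx m (x_du m G) = euler_u m G + (\<Sum>j<m. pvar (Inl j) * u_dx m (pd (Inr j) G))"
    unfolding x_du_def[of m G] ops_sum derivation_mult
    by (simp add: pvar_ops euler_u_def sum.distrib sum_lessThan_if_less)
  have c: "(\<Sum>j<m. pvar (Inr j) * x_du m (pd (Inl j) G)) = (\<Sum>j<m. pvar (Inl j) * u_dx m (pd (Inr j) G))"
    unfolding x_du_def u_dx_def sum_distrib_left
    by (subst sum.swap) (simp add: pd_commute[of "Inr _" "Inl _"] mult.left_commute)
  show ?thesis using a b c by simp
qed

lemma Ppq_normx2: "normx2 m \<in> Ppq m 2 0"
  unfolding normx2_def by (rule Ppq_sum) (rule Ppq_multI[OF Ppq_pvar_x Ppq_pvar_x]; simp)
lemma Ppq_normu2: "normu2 m \<in> Ppq m 0 2"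
  unfolding normu2_def by (rule Ppq_sum) (rule Ppq_multI[OF Ppq_pvar_u Ppq_pvar_u]; simp)
lemma Ppq_ux: "ux m \<in> Ppq m 1 1"
  unfolding ux_def by (rule Ppq_sum) (rule Ppq_multI[OF Ppq_pvar_u Ppq_pvar_x]; simp)

lemma Ppq_ops:
  assumes "P \<in> Ppq m p q"
  shows "u_dx m P \<in> Ppq m (p - 1) (q + 1)" "x_du m P \<in> Ppq m (p + 1) (q - 1)"
    "du_dx m P \<in> Ppq m (p - 1) (q - 1)" "lap_x m P \<in> Ppq m (p - 2) q" "lap_u m P \<in> Ppq m p (q - 2)"
proof -
  show "u_dx m P \<in> Ppq m (p - 1) (q + 1)" unfolding u_dx_def
    by (rule Ppq_sum, rule Ppq_multI[OF Ppq_pvar_u Ppq_pd_x[OF assms]]) auto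
  show "x_du m P \<in> Ppq m (p + 1) (q - 1)" unfolding x_du_def
    by (rule Ppq_sum, rule Ppq_multI[OF Ppq_pvar_x Ppq_pd_u[OF assms]]) auto
  show "du_dx m P \<in> Ppq m (p - 1) (q - 1)" unfolding du_dx_def
    by (rule Ppq_sum, rule Ppq_pd_u[OF Ppq_pd_x[OF assms]])
  show "lap_x m P \<in> Ppq m (p - 2) q" unfolding lap_x_def
    by (rule Ppq_sum) (use Ppq_pd_x[OF Ppq_pd_x[OF assms]] in \<open>simp add: diff_diff_left numeral_2_eq_2\<close>)
  show "lap_u m P \<in> Ppq m p (q - 2)" unfolding lap_u_def
    by (rule Ppq_sum) (use Ppq_pd_u[OF Ppq_pd_u[OF assms]] in \<open>simp add: diff_diff_left numeral_2_eq_2\<close>)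
qed

lemma pd_x_deg0: assumes "P \<in> Ppq m 0 q" shows "pd (Inl j) P = 0"
proof (rule poly_mapping_eqI)
  fix b
  show "Poly_Mapping.lookup (pd (Inl j) P) b = Poly_Mapping.lookup 0 b"
  proof (cases "b + unit_mono (Inl j) \<in> Poly_Mapping.keys P")
    case True
    have "Inl j \<in> Poly_Mapping.keys (b + unit_mono (Inl j))" by (simp add: in_keys_iff lookup_add)
    then have jm: "j < m" using assms True unfolding Ppq_def by (force simp: var_idx_def)
    have "degx m (b + unit_mono (Inl j)) \<ge> 1" using jm deg_unit_mono[of m j] by (simp add: degx_add)
    then show ?thesis using assms True unfolding Ppq_def by auto
  qed (simp add: lookup_pd in_keys_iff)
qed

lemma pd_u_deg0: assumes "P \<in> Ppq m p 0" shows "pd (Inr j) P = 0"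
proof (rule poly_mapping_eqI)
  fix b
  show "Poly_Mapping.lookup (pd (Inr j) P) b = Poly_Mapping.lookup 0 b"
  proof (cases "b + unit_mono (Inr j) \<in> Poly_Mapping.keys P")
    case True
    have "Inr j \<in> Poly_Mapping.keys (b + unit_mono (Inr j))" by (simp add: in_keys_iff lookup_add)
    then have jm: "j < m" using assms True unfolding Ppq_def by (force simp: var_idx_def)
    have "degu m (b + unit_mono (Inr j)) \<ge> 1" using jm deg_unit_mono[of m j] by (simp add: degu_add)
    then show ?thesis using assms True unfolding Ppq_def by auto
  qed (simp add: lookup_pd in_keys_iff)
qed

lemma ops_deg0:
  "P \<in> Ppq m 0 q \<Longrightarrow> u_dx m P = 0" "P \<in> Ppq m 0 q \<Longrightarrow> du_dx m P = 0"
  "P \<in> Ppq m p 0 \<Longrightarrow> x_du m P = 0" "P \<in> Ppq m p 0 \<Longrightarrow> du_dx m P = 0"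
  by (simp_all add: u_dx_def x_du_def du_dx_def pd_x_deg0 pd_u_deg0 pd_u_deg0[OF Ppq_pd_x[of _ _ _ 0, simplified]])

section \<open>The Fischer inner product\<close>

definition mono_fact :: "mono \<Rightarrow> nat" where "mono_fact a = (\<Prod>v\<in>Poly_Mapping.keys a. fact (Poly_Mapping.lookup a v))"

text \<open>The weights \<open>a!\<close> make multiplication by a variable adjoint to differentiation by it.\<close>

definition fischer :: "cpoly \<Rightarrow> cpoly \<Rightarrow> complex" where
  "fischer P Q = (\<Sum>a\<in>Poly_Mapping.keys P. of_nat (mono_fact a) * Poly_Mapping.lookup P a * cnj (Poly_Mapping.lookup Q a))"

lemma mono_fact_superset: "finite S \<Longrightarrow> Poly_Mapping.keys a \<subseteq> S \<Longrightarrow> mono_fact a = (\<Prod>v\<in>S. fact (Poly_Mapping.lookup a v))"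
  unfolding mono_fact_def by (rule prod.mono_neutral_left) (auto simp: in_keys_iff)

lemma mono_fact_pos: "mono_fact a > 0"
  unfolding mono_fact_def by (simp add: prod_pos)

lemma mono_fact_add_unit: "mono_fact (b + unit_mono v) = (Poly_Mapping.lookup b v + 1) * mono_fact b"
proof -
  define S where "S = insert v (Poly_Mapping.keys b)"
  have fS: "finite S" by (simp add: S_def)
  have k1: "Poly_Mapping.keys (b + unit_mono v) \<subseteq> S" using keys_add[of b "unit_mono v"] by (auto simp: S_def)
  have k2: "Poly_Mapping.keys b \<subseteq> S" by (auto simp: S_def)
  have vS: "v \<in> S" by (simp add: S_def)
  have "mono_fact (b + unit_mono v) = fact (Poly_Mapping.lookup b v + 1) * (\<Prod>w\<in>S - {v}. fact (Poly_Mapping.lookup (b + unit_mono v) w))"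
    by (subst mono_fact_superset[OF fS k1]) (simp add: prod.remove[OF fS vS] lookup_add)
  also have "(\<Prod>w\<in>S - {v}. fact (Poly_Mapping.lookup (b + unit_mono v) w)) = (\<Prod>w\<in>S - {v}. fact (Poly_Mapping.lookup b w))"
    by (rule prod.cong) (auto simp: lookup_add lookup_single when_def)
  also have "mono_fact b = fact (Poly_Mapping.lookup b v) * (\<Prod>w\<in>S - {v}. fact (Poly_Mapping.lookup b w))"
    by (simp add: mono_fact_superset[OF fS k2] prod.remove[OF fS vS])
  ultimately show ?thesis by (simp add: algebra_simps)
qed

lemma fischer_superset: "finite S \<Longrightarrow> Poly_Mapping.keys P \<subseteq> S \<Longrightarrow>
   fischer P Q = (\<Sum>a\<in>S. of_nat (mono_fact a) * Poly_Mapping.lookup P a * cnj (Poly_Mapping.lookup Q a))"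
  unfolding fischer_def by (rule sum.mono_neutral_left) (auto simp: in_keys_iff)

lemma fischer_add: "fischer (P + Q) R = fischer P R + fischer Q R"
proof -
  define S where "S = Poly_Mapping.keys P \<union> Poly_Mapping.keys Q"
  have "finite S" by (simp add: S_def)
  moreover have "Poly_Mapping.keys (P + Q) \<subseteq> S" "Poly_Mapping.keys P \<subseteq> S" "Poly_Mapping.keys Q \<subseteq> S"
    using keys_add[of P Q] by (auto simp: S_def)
  ultimately show ?thesis
    by (simp add: fischer_superset lookup_add algebra_simps sum.distrib)
qed

lemma fischer_uminus: "fischer (- P) R = - fischer P R"
  by (simp add: fischer_def sum_negf)
lemma fischer_diff: "fischer (P - Q) R = fischer P R - fischer Q R"
  using fischer_add[of P "-Q" R] fischer_uminus[of Q R] by simp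
lemma fischer_zero[simp]: "fischer 0 R = 0" "fischer R 0 = 0"
  by (simp_all add: fischer_def)
lemma fischer_sum: "fischer (sum f A) R = (\<Sum>i\<in>A. fischer (f i) R)"
  by (induction A rule: infinite_finite_induct) (simp_all add: fischer_add)
lemma fischer_add_right: "fischer P (Q + R) = fischer P Q + fischer P R"
  by (simp add: fischer_def lookup_add algebra_simps sum.distrib)
lemma fischer_sum_right: "fischer P (sum f A) = (\<Sum>i\<in>A. fischer P (f i))"
  by (induction A rule: infinite_finite_induct) (simp_all add: fischer_add_right)

lemma fischer_pvar_adjoint: "fischer (pvar v * P) Q = fischer P (pd v Q)"
proof -
  define S where "S = (\<lambda>b. b + unit_mono v) ` Poly_Mapping.keys P"
  have fS: "finite S" by (simp add: S_def)
  have kS: "Poly_Mapping.keys (pvar v * P) \<subseteq> S"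
  proof
    fix a assume "a \<in> Poly_Mapping.keys (pvar v * P)"
    then have h: "Poly_Mapping.lookup a v \<noteq> 0" "a - unit_mono v \<in> Poly_Mapping.keys P"
      by (auto simp: in_keys_iff lookup_pvar_mult split: if_splits)
    have "a = (a - unit_mono v) + unit_mono v" using h(1)
      by (auto intro!: poly_mapping_eqI simp: lookup_add lookup_minus lookup_single when_def)
    then show "a \<in> S" using h(2) unfolding S_def by blast
  qed
  have inj: "inj_on (\<lambda>b. b + unit_mono v) (Poly_Mapping.keys P)"
    by (auto intro!: inj_onI)
  have sub: "b + unit_mono v - unit_mono v = b" for b :: mono
    by (auto intro!: poly_mapping_eqI simp: lookup_add lookup_minus)
  have "fischer (pvar v * P) Q = (\<Sum>a\<in>S. of_nat (mono_fact a) * Poly_Mapping.lookup (pvar v * P) a * cnj (Poly_Mapping.lookup Q a))"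
    by (rule fischer_superset[OF fS kS])
  also have "\<dots> = (\<Sum>b\<in>Poly_Mapping.keys P. of_nat (mono_fact (b + unit_mono v)) * Poly_Mapping.lookup (pvar v * P) (b + unit_mono v) * cnj (Poly_Mapping.lookup Q (b + unit_mono v)))"
    unfolding S_def by (subst sum.reindex[OF inj]) (simp add: o_def)
  also have "\<dots> = (\<Sum>b\<in>Poly_Mapping.keys P. of_nat (mono_fact b) * Poly_Mapping.lookup P b * cnj (Poly_Mapping.lookup (pd v Q) b))"
  proof (rule sum.cong[OF refl])
    fix x
    have h1: "Poly_Mapping.lookup (pvar v * P) (x + unit_mono v) = Poly_Mapping.lookup P x"
      by (simp add: lookup_pvar_mult lookup_add sub)
    have h2: "Poly_Mapping.lookup (pd v Q) x = of_nat (Poly_Mapping.lookup x v + 1) * Poly_Mapping.lookup Q (x + unit_mono v)"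
      by (rule lookup_pd)
    show "of_nat (mono_fact (x + unit_mono v)) * Poly_Mapping.lookup (pvar v * P) (x + unit_mono v) * cnj (Poly_Mapping.lookup Q (x + unit_mono v)) =
         of_nat (mono_fact x) * Poly_Mapping.lookup P x * cnj (Poly_Mapping.lookup (pd v Q) x)"
      unfolding h1 h2 mono_fact_add_unit by (simp add: algebra_simps)
  qed
  finally show ?thesis by (simp add: fischer_def)
qed

lemma fischer_self_eq_0D: assumes "fischer P P = 0" shows "P = 0"
proof (rule ccontr)
  assume "P \<noteq> 0"
  then obtain a0 where a0: "a0 \<in> Poly_Mapping.keys P"
    by (metis keys_eq_empty ex_in_conv)
  have "fischer P P = of_real (\<Sum>a\<in>Poly_Mapping.keys P. real (mono_fact a) * (cmod (Poly_Mapping.lookup P a))\<^sup>2)"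
    unfolding fischer_def of_real_sum
  proof (rule sum.cong[OF refl])
    fix a
    have "complex_of_real (real (mono_fact a) * (cmod (Poly_Mapping.lookup P a))\<^sup>2) =
       of_nat (mono_fact a) * (Poly_Mapping.lookup P a * cnj (Poly_Mapping.lookup P a))"
      by (simp only: of_real_mult complex_norm_square) simp
    then show "of_nat (mono_fact a) * Poly_Mapping.lookup P a * cnj (Poly_Mapping.lookup P a) =
      complex_of_real (real (mono_fact a) * (cmod (Poly_Mapping.lookup P a))\<^sup>2)" by (simp only: mult.assoc)
  qed
  moreover have "(\<Sum>a\<in>Poly_Mapping.keys P. real (mono_fact a) * (cmod (Poly_Mapping.lookup P a))\<^sup>2) > 0"
  proof (rule sum_pos2[OF finite_keys a0])
    show "0 < real (mono_fact a0) * (cmod (Poly_Mapping.lookup P a0))\<^sup>2"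
      using a0 mono_fact_pos[of a0] by (simp add: in_keys_iff)
  qed (simp)
  ultimately show False using assms by (metis of_real_eq_0_iff less_irrefl)
qed

lemma fischer_normx2_adjoint: "fischer (normx2 m * A) G = fischer A (lap_x m G)"
  by (simp add: normx2_def lap_x_def sum_distrib_right fischer_sum fischer_sum_right mult.assoc fischer_pvar_adjoint)
lemma fischer_normu2_adjoint: "fischer (normu2 m * A) G = fischer A (lap_u m G)"
  by (simp add: normu2_def lap_u_def sum_distrib_right fischer_sum fischer_sum_right mult.assoc fischer_pvar_adjoint)

lemma fischer_normx2_normu2_pow: assumes "lap_x m G = 0" "lap_u m G = 0"
  shows "fischer (normx2 m ^ a * normu2 m ^ b * K) G = (if a = 0 \<and> b = 0 then fischer K G else 0)"
proof (cases a)
  case 0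
  then show ?thesis
  proof (cases b)
    case (Suc b')
    have e: "normx2 m ^ a * normu2 m ^ b * K = normu2 m * (normu2 m ^ b' * K)" using 0 Suc by simp
    show ?thesis unfolding e fischer_normu2_adjoint assms using Suc by simp
  qed simp
next
  case (Suc a')
  have e: "normx2 m ^ a * normu2 m ^ b * K = normx2 m * (normx2 m ^ a' * normu2 m ^ b * K)" using Suc by (simp add: mult.assoc)
  show ?thesis unfolding e fischer_normx2_adjoint assms using Suc by simp
qed

lemma fischer_sum_normx2_normu2_pow: assumes "lap_x m G = 0" "lap_u m G = 0"
  shows "fischer (\<Sum>a\<le>A. \<Sum>b\<le>B. normx2 m ^ a * normu2 m ^ b * Hs a b) G = fischer (Hs 0 0) G"
proof -
  have "fischer (\<Sum>a\<le>A. \<Sum>b\<le>B. normx2 m ^ a * normu2 m ^ b * Hs a b) G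
     = (\<Sum>a\<le>A. \<Sum>b\<le>B. if a = 0 \<and> b = 0 then fischer (Hs a b) G else 0)"
    unfolding fischer_sum fischer_normx2_normu2_pow[OF assms] by (rule refl)
  also have "\<dots> = (\<Sum>a\<le>A. if a = 0 then fischer (Hs 0 0) G else 0)"
  proof (rule sum.cong[OF refl])
    fix a show "(\<Sum>b\<le>B. if a = 0 \<and> b = 0 then fischer (Hs a b) G else 0) = (if a = 0 then fischer (Hs 0 0) G else 0)"
      by (cases "a = 0") simp_all
  qed
  also have "\<dots> = fischer (Hs 0 0) G" by simp
  finally show ?thesis .
qed

lemma pi_s_eqI:
  assumes P: "P \<in> Ppq m p q"
    and Hs: "\<forall>a\<le>p div 2. \<forall>b\<le>q div 2. Hs a b \<in> Harm m (p - 2*a) (q - 2*b)"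
    and eq: "P = (\<Sum>a\<le>p div 2. \<Sum>b\<le>q div 2. normx2 m ^ a * normu2 m ^ b * Hs a b)"
  shows "pi_s m P = Hs 0 0"
  unfolding pi_s_def
proof (rule the_equality)
  show "\<exists>p q Hs'. P \<in> Ppq m p q \<and> (\<forall>a\<le>p div 2. \<forall>b\<le>q div 2. Hs' a b \<in> Harm m (p - 2*a) (q - 2*b)) \<and>
      P = (\<Sum>a\<le>p div 2. \<Sum>b\<le>q div 2. normx2 m ^ a * normu2 m ^ b * Hs' a b) \<and> Hs 0 0 = Hs' 0 0"
    using assms by blast
next
  fix H assume "\<exists>p q Hs'. P \<in> Ppq m p q \<and> (\<forall>a\<le>p div 2. \<forall>b\<le>q div 2. Hs' a b \<in> Harm m (p - 2*a) (q - 2*b)) \<and>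
      P = (\<Sum>a\<le>p div 2. \<Sum>b\<le>q div 2. normx2 m ^ a * normu2 m ^ b * Hs' a b) \<and> H = Hs' 0 0"
  then obtain p' q' Hs' where Hs': "\<forall>a\<le>p' div 2. \<forall>b\<le>q' div 2. Hs' a b \<in> Harm m (p' - 2*a) (q' - 2*b)"
    and eq': "P = (\<Sum>a\<le>p' div 2. \<Sum>b\<le>q' div 2. normx2 m ^ a * normu2 m ^ b * Hs' a b)" and H: "H = Hs' 0 0"
    by blast
  define G where "G = Hs 0 0 - Hs' 0 0"
  have h1: "Hs 0 0 \<in> Harm m p q" using Hs[rule_format, of 0 0] by simp
  have h2: "Hs' 0 0 \<in> Harm m p' q'" using Hs'[rule_format, of 0 0] by simp
  have lG: "lap_x m G = 0" "lap_u m G = 0"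
    using h1 h2 by (auto simp: G_def Harm_def ops_diff)
  have "fischer P G = fischer (Hs 0 0) G" using fischer_sum_normx2_normu2_pow[OF lG] eq by simp
  moreover have "fischer P G = fischer (Hs' 0 0) G" using fischer_sum_normx2_normu2_pow[OF lG] eq' by simp
  ultimately have "fischer G G = 0" by (simp add: G_def fischer_diff)
  then have "G = 0" by (rule fischer_self_eq_0D)
  then show "H = Hs 0 0" by (simp add: G_def H)
qed

lemma Harm_zero[simp]: "0 \<in> Harm m p q"
  by (simp add: Harm_def)
lemma Harm_add: "P \<in> Harm m p q \<Longrightarrow> Q \<in> Harm m p q \<Longrightarrow> P + Q \<in> Harm m p q"
  by (simp add: Harm_def Ppq_add ops_add)
lemma Harm_pconst: "P \<in> Harm m p q \<Longrightarrow> pconst c * P \<in> Harm m p q"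
  by (simp add: Harm_def Ppq_pconst ops_pconst)

text \<open>The decompositions in the definition of \<open>pi_s\<close>, for a fixed bidegree;
  membership of \<open>P\<close> in \<open>Ppq m p q\<close> follows from the decomposition.\<close>

definition fischer_decomp :: "nat \<Rightarrow> nat \<Rightarrow> nat \<Rightarrow> cpoly \<Rightarrow> cpoly \<Rightarrow> bool" where
  "fischer_decomp m p q P H = (\<exists>Hs. (\<forall>a\<le>p div 2. \<forall>b\<le>q div 2. Hs a b \<in> Harm m (p - 2*a) (q - 2*b)) \<and>
      P = (\<Sum>a\<le>p div 2. \<Sum>b\<le>q div 2. normx2 m ^ a * normu2 m ^ b * Hs a b) \<and> H = Hs 0 0)"

lemma pi_s_fischer_decomp: assumes "fischer_decomp m p q P H" shows "pi_s m P = H"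
proof -
  obtain Hs where Hs: "\<forall>a\<le>p div 2. \<forall>b\<le>q div 2. Hs a b \<in> Harm m (p - 2*a) (q - 2*b)"
    and eq: "P = (\<Sum>a\<le>p div 2. \<Sum>b\<le>q div 2. normx2 m ^ a * normu2 m ^ b * Hs a b)" and H: "H = Hs 0 0"
    using assms unfolding fischer_decomp_def by blast
  have "P \<in> Ppq m p q"
    unfolding eq
  proof (intro Ppq_sum)
    fix a b assume a: "a \<in> {..p div 2}" and b: "b \<in> {..q div 2}"
    have h: "Hs a b \<in> Ppq m (p - 2*a) (q - 2*b)" using Hs a b by (auto simp: Harm_def)
    have n: "normx2 m ^ a * normu2 m ^ b \<in> Ppq m (2*a) (2*b)"
      using Ppq_mult[OF Ppq_power[OF Ppq_normx2, where n=a] Ppq_power[OF Ppq_normu2, where n=b]] by (simp add: mult.commute)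
    show "normx2 m ^ a * normu2 m ^ b * Hs a b \<in> Ppq m p q"
      by (rule Ppq_multI[OF n h]) (use a b in auto)
  qed
  then show ?thesis using pi_s_eqI[OF _ Hs eq] H by simp
qed

lemma sum_sum_delta_0: "(\<Sum>a\<le>(A::nat). \<Sum>b\<le>(B::nat). if a = 0 \<and> b = 0 then f a b else 0) = f 0 0"
proof -
  have "(\<Sum>a\<le>A. \<Sum>b\<le>B. if a = 0 \<and> b = 0 then f a b else 0) = (\<Sum>a\<le>A. if a = 0 then f 0 0 else 0)"
  proof (rule sum.cong[OF refl])
    fix a show "(\<Sum>b\<le>B. if a = 0 \<and> b = 0 then f a b else 0) = (if a = 0 then f 0 0 else 0)"
    proof (cases "a = 0")
      case True
      have "(\<Sum>b\<le>B. if a = 0 \<and> b = 0 then f a b else 0) = (\<Sum>b\<le>B. if b = 0 then f 0 0 else 0)"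
        by (rule sum.cong) (auto simp: True)
      moreover have "(\<Sum>b\<le>B. if b = 0 then f 0 0 else 0) = f 0 0" by (induct B) auto
      ultimately show ?thesis using True by simp
    qed simp
  qed
  then show ?thesis by simp
qed

lemma fischer_decomp_Harm: assumes "H \<in> Harm m p q" shows "fischer_decomp m p q H H"
  unfolding fischer_decomp_def
proof (rule exI[of _ "\<lambda>a b. if a = 0 \<and> b = 0 then H else 0"], intro conjI)
  have "(\<Sum>a\<le>p div 2. \<Sum>b\<le>q div 2. normx2 m ^ a * normu2 m ^ b * (if a = 0 \<and> b = 0 then H else 0)) =
    (\<Sum>a\<le>p div 2. \<Sum>b\<le>q div 2. if a = 0 \<and> b = 0 then normx2 m ^ a * normu2 m ^ b * H else 0)"
    by (intro sum.cong) auto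
  then show "H = (\<Sum>a\<le>p div 2. \<Sum>b\<le>q div 2. normx2 m ^ a * normu2 m ^ b * (if a = 0 \<and> b = 0 then H else 0))"
    by (simp only: sum_sum_delta_0) simp
qed (use assms in auto)

lemma fischer_decomp_add: assumes "fischer_decomp m p q P H" "fischer_decomp m p q P' H'" shows "fischer_decomp m p q (P + P') (H + H')"
proof -
  obtain Hs where "\<forall>a\<le>p div 2. \<forall>b\<le>q div 2. Hs a b \<in> Harm m (p - 2*a) (q - 2*b)"
    "P = (\<Sum>a\<le>p div 2. \<Sum>b\<le>q div 2. normx2 m ^ a * normu2 m ^ b * Hs a b)" "H = Hs 0 0"
    using assms(1) unfolding fischer_decomp_def by blast
  moreover obtain Hs' where "\<forall>a\<le>p div 2. \<forall>b\<le>q div 2. Hs' a b \<in> Harm m (p - 2*a) (q - 2*b)"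
    "P' = (\<Sum>a\<le>p div 2. \<Sum>b\<le>q div 2. normx2 m ^ a * normu2 m ^ b * Hs' a b)" "H' = Hs' 0 0"
    using assms(2) unfolding fischer_decomp_def by blast
  ultimately show ?thesis unfolding fischer_decomp_def
    by (intro exI[of _ "\<lambda>a b. Hs a b + Hs' a b"]) (simp add: Harm_add distrib_left sum.distrib)
qed

lemma fischer_decomp_pconst: assumes "fischer_decomp m p q P H" shows "fischer_decomp m p q (pconst c * P) (pconst c * H)"
proof -
  obtain Hs where "\<forall>a\<le>p div 2. \<forall>b\<le>q div 2. Hs a b \<in> Harm m (p - 2*a) (q - 2*b)"
    "P = (\<Sum>a\<le>p div 2. \<Sum>b\<le>q div 2. normx2 m ^ a * normu2 m ^ b * Hs a b)" "H = Hs 0 0"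
    using assms(1) unfolding fischer_decomp_def by blast
  then show ?thesis unfolding fischer_decomp_def
    by (intro exI[of _ "\<lambda>a b. pconst c * Hs a b"]) (simp add: Harm_pconst sum_distrib_left mult.left_commute)
qed

lemma fischer_decomp_zero: "fischer_decomp m p q 0 0"
  using fischer_decomp_Harm[OF Harm_zero] .

lemma fischer_decomp_normx2: assumes D: "fischer_decomp m (p - 2) q G H" and c: "2 \<le> p \<or> G = 0"
  shows "fischer_decomp m p q (normx2 m * G) 0"
proof (cases "G = 0")
  case True then show ?thesis by (simp add: fischer_decomp_zero)
next
  case False
  then have p2: "2 \<le> p" using c by simp
  obtain Hs where Hs: "\<forall>a\<le>(p-2) div 2. \<forall>b\<le>q div 2. Hs a b \<in> Harm m (p - 2 - 2*a) (q - 2*b)"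
    and eq: "G = (\<Sum>a\<le>(p-2) div 2. \<Sum>b\<le>q div 2. normx2 m ^ a * normu2 m ^ b * Hs a b)" and H: "H = Hs 0 0"
    using D unfolding fischer_decomp_def by blast
  have pd2: "p div 2 = Suc ((p-2) div 2)" using p2 by (simp add: div_if)
  define Hs' where "Hs' a b = (if a = 0 then 0 else Hs (a - 1) b)" for a b
  show ?thesis unfolding fischer_decomp_def
  proof (rule exI[of _ Hs'], intro conjI allI impI)
    fix a b assume a: "a \<le> p div 2" and b: "b \<le> q div 2"
    show "Hs' a b \<in> Harm m (p - 2 * a) (q - 2 * b)"
    proof (cases a)
      case (Suc a')
      then have "Hs a' b \<in> Harm m (p - 2 - 2*a') (q - 2*b)" using Hs a b pd2 by auto
      moreover have "p - 2 - 2*a' = p - 2*a" using Suc by simp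
      ultimately show ?thesis using Suc by (simp add: Hs'_def)
    qed (simp add: Hs'_def)
  next
    show "normx2 m * G = (\<Sum>a\<le>p div 2. \<Sum>b\<le>q div 2. normx2 m ^ a * normu2 m ^ b * Hs' a b)"
      unfolding pd2 sum.atMost_Suc_shift eq
      by (simp add: Hs'_def sum_distrib_left mult.assoc)
  qed (simp add: Hs'_def)
qed

lemma fischer_decomp_normu2: assumes D: "fischer_decomp m p (q - 2) G H" and c: "2 \<le> q \<or> G = 0"
  shows "fischer_decomp m p q (normu2 m * G) 0"
proof (cases "G = 0")
  case True then show ?thesis by (simp add: fischer_decomp_zero)
next
  case False
  then have q2: "2 \<le> q" using c by simp
  obtain Hs where Hs: "\<forall>a\<le>p div 2. \<forall>b\<le>(q-2) div 2. Hs a b \<in> Harm m (p - 2*a) (q - 2 - 2*b)"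
    and eq: "G = (\<Sum>a\<le>p div 2. \<Sum>b\<le>(q-2) div 2. normx2 m ^ a * normu2 m ^ b * Hs a b)" and H: "H = Hs 0 0"
    using D unfolding fischer_decomp_def by blast
  have qd2: "q div 2 = Suc ((q-2) div 2)" using q2 by (simp add: div_if)
  define Hs' where "Hs' a b = (if b = 0 then 0 else Hs a (b - 1))" for a b
  show ?thesis unfolding fischer_decomp_def
  proof (rule exI[of _ Hs'], intro conjI allI impI)
    fix a b assume a: "a \<le> p div 2" and b: "b \<le> q div 2"
    show "Hs' a b \<in> Harm m (p - 2 * a) (q - 2 * b)"
    proof (cases b)
      case (Suc b')
      then have "Hs a b' \<in> Harm m (p - 2*a) (q - 2 - 2*b')" using Hs a b qd2 by auto
      moreover have "q - 2 - 2*b' = q - 2*b" using Suc by simp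
      ultimately show ?thesis using Suc by (simp add: Hs'_def)
    qed (simp add: Hs'_def)
  next
    show "normu2 m * G = (\<Sum>a\<le>p div 2. \<Sum>b\<le>q div 2. normx2 m ^ a * normu2 m ^ b * Hs' a b)"
      unfolding qd2 sum.atMost_Suc_shift eq
      by (simp add: Hs'_def sum_distrib_left mult.assoc mult.left_commute)
  qed (simp add: Hs'_def)
qed

section \<open>Closed forms of \<open>S_x\<close>, \<open>S_u\<close> and \<open>C\<close> on harmonics\<close>

text \<open>For harmonic \<open>G\<close> of x-degree p - 1 one has \<open>lap_x (|x|^2 G) = (2m + 4(p - 1)) G\<close>, so
  subtracting \<open>proj_coeff m p * |x|^2 * <d_u,d_x>F\<close> cancels the x-Laplacian of \<open><x,d_u>F\<close>
  (\<open>proj_coeff_cancel\<close>); \<open>m > 2\<close> keeps the denominator nonzero.\<close>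

definition proj_coeff :: "nat \<Rightarrow> nat \<Rightarrow> complex" where "proj_coeff m p = 1 / (of_nat m + 2 * of_nat p - 2)"

lemma proj_coeff_cancel: assumes "m > 2" shows "pconst (proj_coeff m p) * (2 * of_nat m + 4 * (of_nat p - 1)) = 2"
proof -
  have nz: "(of_nat m + 2 * of_nat p - 2 :: complex) \<noteq> 0"
  proof
    assume "(of_nat m + 2 * of_nat p - 2 :: complex) = 0"
    then have "(of_nat (m + 2 * p) :: complex) = of_nat 2" by (simp add: algebra_simps)
    then have "m + 2 * p = 2" using of_nat_eq_iff by blast
    then show False using assms by simp
  qed
  have "proj_coeff m p * (2 * of_nat m + 4 * (of_nat p - 1)) = 2"
    using nz by (simp add: proj_coeff_def field_simps)
  then have "pconst (proj_coeff m p * (2 * of_nat m + 4 * (of_nat p - 1))) = pconst 2" by simp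
  then show ?thesis by (simp add: pconst_mult pconst_add pconst_diff pconst_of_nat pconst_numeral)
qed

lemma euler_x_Ppq_pred: assumes "G \<in> Ppq m (p - 1) e" "p = 0 \<Longrightarrow> G = 0" shows "euler_x m G = (of_nat p - 1) * G"
  using assms euler_x_Ppq[OF assms(1)] by (cases p) auto
lemma euler_u_Ppq_pred: assumes "G \<in> Ppq m e (q - 1)" "q = 0 \<Longrightarrow> G = 0" shows "euler_u m G = (of_nat q - 1) * G"
  using assms euler_u_Ppq[OF assms(1)] by (cases q) auto

lemma Harm_du_dx: assumes "F \<in> Harm m p q" shows "du_dx m F \<in> Harm m (p - 1) (q - 1)"
  using assms Ppq_ops(3)[of F m p q] by (simp add: Harm_def ops_commute_lap[symmetric])

lemma euler_x_du_dx: assumes "F \<in> Harm m p q" shows "euler_x m (du_dx m F) = (of_nat p - 1) * du_dx m F"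
proof (cases p)
  case 0
  have "F \<in> Ppq m 0 q" using assms 0 by (simp add: Harm_def)
  then show ?thesis by (simp add: ops_deg0)
next
  case (Suc p') then show ?thesis using euler_x_Ppq[OF Ppq_ops(3)[of F m p q]] assms by (simp add: Harm_def)
qed

lemma euler_u_du_dx: assumes "F \<in> Harm m p q" shows "euler_u m (du_dx m F) = (of_nat q - 1) * du_dx m F"
proof (cases q)
  case 0
  have "F \<in> Ppq m p 0" using assms 0 by (simp add: Harm_def)
  then show ?thesis by (simp add: ops_deg0)
next
  case (Suc q') then show ?thesis using euler_u_Ppq[OF Ppq_ops(3)[of F m p q]] assms by (simp add: Harm_def)
qed

definition S_x_expl :: "nat \<Rightarrow> nat \<Rightarrow> cpoly \<Rightarrow> cpoly" where
  "S_x_expl m p F = x_du m F - pconst (proj_coeff m p) * (normx2 m * du_dx m F)"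

lemma S_x_expl_Harm: assumes m: "m > 2" and F: "F \<in> Harm m p q"
  shows "S_x_expl m p F \<in> Harm m (p + 1) (q - 1)"
proof -
  let ?W = "du_dx m F"
  have FP: "F \<in> Ppq m p q" and lx: "lap_x m F = 0" and lu: "lap_u m F = 0" using F by (auto simp: Harm_def)
  have WH: "?W \<in> Harm m (p - 1) (q - 1)" by (rule Harm_du_dx[OF F])
  have P1: "normx2 m * ?W \<in> Ppq m (p + 1) (q - 1)"
  proof (cases p)
    case 0 then show ?thesis using FP by (simp add: ops_deg0)
  next
    case (Suc p') then show ?thesis using Ppq_mult[OF Ppq_normx2 Ppq_ops(3)[OF FP]] by simp
  qed
  have "S_x_expl m p F \<in> Ppq m (p + 1) (q - 1)"
    unfolding S_x_expl_def by (intro Ppq_diff Ppq_ops(2)[OF FP] Ppq_pconst P1)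
  moreover have "lap_x m (S_x_expl m p F) = 0"
  proof -
    have lW: "lap_x m ?W = 0" using WH by (simp add: Harm_def)
    have "lap_x m (S_x_expl m p F) = 2 * ?W - pconst (proj_coeff m p) * (2 * of_nat m * ?W + 4 * ((of_nat p - 1) * ?W))"
      by (simp add: S_x_expl_def ops_diff ops_pconst lap_x_x_du lx lap_x_normx2 euler_x_du_dx[OF F] lW)
    also have "\<dots> = 2 * ?W - pconst (proj_coeff m p) * (2 * of_nat m + 4 * (of_nat p - 1)) * ?W"
      by (simp add: algebra_simps)
    finally have "lap_x m (S_x_expl m p F) = 2 * ?W - pconst (proj_coeff m p) * (2 * of_nat m + 4 * (of_nat p - 1)) * ?W" .
    then show ?thesis unfolding proj_coeff_cancel[OF m] by simp
  qed
  moreover have "lap_u m (S_x_expl m p F) = 0"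
    using WH by (simp add: S_x_expl_def ops_diff ops_pconst lap_u_x_du lu lap_u_normx2 Harm_def)
  ultimately show ?thesis by (simp add: Harm_def)
qed

lemma fischer_decomp_x_du: assumes m: "m > 2" and F: "F \<in> Harm m p q"
  shows "fischer_decomp m (p + 1) (q - 1) (x_du m F) (S_x_expl m p F)"
proof -
  have d1: "fischer_decomp m (p + 1) (q - 1) (S_x_expl m p F) (S_x_expl m p F)" by (rule fischer_decomp_Harm[OF S_x_expl_Harm[OF m F]])
  have WH: "pconst (proj_coeff m p) * du_dx m F \<in> Harm m (p + 1 - 2) (q - 1)"
    using Harm_pconst[OF Harm_du_dx[OF F]] by simp
  have d2: "fischer_decomp m (p + 1) (q - 1) (normx2 m * (pconst (proj_coeff m p) * du_dx m F)) 0"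
  proof (rule fischer_decomp_normx2[OF fischer_decomp_Harm[OF WH]])
    show "2 \<le> p + 1 \<or> pconst (proj_coeff m p) * du_dx m F = 0"
      using F by (cases p) (auto simp: Harm_def ops_deg0)
  qed
  have "x_du m F = S_x_expl m p F + normx2 m * (pconst (proj_coeff m p) * du_dx m F)"
    by (simp add: S_x_expl_def mult.left_commute)
  then show ?thesis using fischer_decomp_add[OF d1 d2] by simp
qed

lemma S_x_Harm: assumes "m > 2" "F \<in> Harm m p q"
  shows "S_x m F = S_x_expl m p F" "S_x m F \<in> Harm m (p + 1) (q - 1)"
  using pi_s_fischer_decomp[OF fischer_decomp_x_du[OF assms]] S_x_expl_Harm[OF assms] by (simp_all add: S_x_def)

definition S_u_expl :: "nat \<Rightarrow> nat \<Rightarrow> cpoly \<Rightarrow> cpoly" where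
  "S_u_expl m q F = u_dx m F - pconst (proj_coeff m q) * (normu2 m * du_dx m F)"

lemma S_u_expl_Harm: assumes m: "m > 2" and F: "F \<in> Harm m p q"
  shows "S_u_expl m q F \<in> Harm m (p - 1) (q + 1)"
proof -
  let ?W = "du_dx m F"
  have FP: "F \<in> Ppq m p q" and lx: "lap_x m F = 0" and lu: "lap_u m F = 0" using F by (auto simp: Harm_def)
  have WH: "?W \<in> Harm m (p - 1) (q - 1)" by (rule Harm_du_dx[OF F])
  have P1: "normu2 m * ?W \<in> Ppq m (p - 1) (q + 1)"
  proof (cases q)
    case 0 then show ?thesis using FP by (simp add: ops_deg0)
  next
    case (Suc q') then show ?thesis using Ppq_mult[OF Ppq_normu2 Ppq_ops(3)[OF FP]] by simp
  qed
  have "S_u_expl m q F \<in> Ppq m (p - 1) (q + 1)"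
    unfolding S_u_expl_def by (intro Ppq_diff Ppq_ops(1)[OF FP] Ppq_pconst P1)
  moreover have "lap_u m (S_u_expl m q F) = 0"
  proof -
    have lW: "lap_u m ?W = 0" using WH by (simp add: Harm_def)
    have "lap_u m (S_u_expl m q F) = 2 * ?W - pconst (proj_coeff m q) * (2 * of_nat m * ?W + 4 * ((of_nat q - 1) * ?W))"
      by (simp add: S_u_expl_def ops_diff ops_pconst lap_u_u_dx lu lap_u_normu2 euler_u_du_dx[OF F] lW)
    also have "\<dots> = 2 * ?W - pconst (proj_coeff m q) * (2 * of_nat m + 4 * (of_nat q - 1)) * ?W"
      by (simp add: algebra_simps)
    finally have "lap_u m (S_u_expl m q F) = 2 * ?W - pconst (proj_coeff m q) * (2 * of_nat m + 4 * (of_nat q - 1)) * ?W" .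
    then show ?thesis unfolding proj_coeff_cancel[OF m] by simp
  qed
  moreover have "lap_x m (S_u_expl m q F) = 0"
    using WH by (simp add: S_u_expl_def ops_diff ops_pconst lap_x_u_dx lx lap_x_normu2 Harm_def)
  ultimately show ?thesis by (simp add: Harm_def)
qed

lemma fischer_decomp_u_dx: assumes m: "m > 2" and F: "F \<in> Harm m p q"
  shows "fischer_decomp m (p - 1) (q + 1) (u_dx m F) (S_u_expl m q F)"
proof -
  have d1: "fischer_decomp m (p - 1) (q + 1) (S_u_expl m q F) (S_u_expl m q F)" by (rule fischer_decomp_Harm[OF S_u_expl_Harm[OF m F]])
  have WH: "pconst (proj_coeff m q) * du_dx m F \<in> Harm m (p - 1) (q + 1 - 2)"
    using Harm_pconst[OF Harm_du_dx[OF F]] by simp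
  have d2: "fischer_decomp m (p - 1) (q + 1) (normu2 m * (pconst (proj_coeff m q) * du_dx m F)) 0"
  proof (rule fischer_decomp_normu2[OF fischer_decomp_Harm[OF WH]])
    show "2 \<le> q + 1 \<or> pconst (proj_coeff m q) * du_dx m F = 0"
      using F by (cases q) (auto simp: Harm_def ops_deg0)
  qed
  have "u_dx m F = S_u_expl m q F + normu2 m * (pconst (proj_coeff m q) * du_dx m F)"
    by (simp add: S_u_expl_def mult.left_commute)
  then show ?thesis using fischer_decomp_add[OF d1 d2] by simp
qed

lemma S_u_Harm: assumes "m > 2" "F \<in> Harm m p q"
  shows "S_u m F = S_u_expl m q F" "S_u m F \<in> Harm m (p - 1) (q + 1)"
  using pi_s_fischer_decomp[OF fischer_decomp_u_dx[OF assms]] S_u_expl_Harm[OF assms] by (simp_all add: S_u_def)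

definition C_expl :: "nat \<Rightarrow> nat \<Rightarrow> nat \<Rightarrow> cpoly \<Rightarrow> cpoly" where
  "C_expl m p q F = ux m * F - pconst (proj_coeff m p) * (normx2 m * S_u_expl m q F) - pconst (proj_coeff m q) * (normu2 m * S_x_expl m p F)
     - pconst (proj_coeff m p * proj_coeff m q) * (normx2 m * (normu2 m * du_dx m F))"

lemma C_expl_Ppq: assumes m: "m > 2" and F: "F \<in> Harm m p q"
  shows "C_expl m p q F \<in> Ppq m (p + 1) (q + 1)"
proof -
  let ?W = "du_dx m F" and ?Su = "S_u_expl m q F" and ?Sx = "S_x_expl m p F"
  have FP: "F \<in> Ppq m p q" using F by (simp add: Harm_def)
  have SuP: "?Su \<in> Ppq m (p - 1) (q + 1)" using S_u_expl_Harm[OF m F] by (simp add: Harm_def)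
  have SxP: "?Sx \<in> Ppq m (p + 1) (q - 1)" using S_x_expl_Harm[OF m F] by (simp add: Harm_def)
  have WP: "?W \<in> Ppq m (p - 1) (q - 1)" using Harm_du_dx[OF F] by (simp add: Harm_def)
  have p0: "p = 0 \<Longrightarrow> ?W = 0 \<and> ?Su = 0" and q0: "q = 0 \<Longrightarrow> ?W = 0 \<and> ?Sx = 0"
    using FP by (auto simp: ops_deg0 S_u_expl_def S_x_expl_def)
  have "ux m * F \<in> Ppq m (p + 1) (q + 1)" using Ppq_mult[OF Ppq_ux FP] by simp
  moreover have "normx2 m * ?Su \<in> Ppq m (p + 1) (q + 1)"
    using p0 Ppq_mult[OF Ppq_normx2 SuP] by (cases p) simp_all
  moreover have "normu2 m * ?Sx \<in> Ppq m (p + 1) (q + 1)"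
    using q0 Ppq_mult[OF Ppq_normu2 SxP] by (cases q) simp_all
  moreover have "normx2 m * (normu2 m * ?W) \<in> Ppq m (p + 1) (q + 1)"
  proof (cases "p = 0 \<or> q = 0")
    case True then show ?thesis using p0 q0 by auto
  next
    case False then show ?thesis
      by (intro Ppq_multI[OF Ppq_normx2 Ppq_multI[OF Ppq_normu2 WP]]) auto
  qed
  ultimately show ?thesis unfolding C_expl_def by (intro Ppq_diff Ppq_pconst)
qed

lemma lap_x_C_expl: assumes m: "m > 2" and F: "F \<in> Harm m p q"
  shows "lap_x m (C_expl m p q F) = 0"
proof -
  let ?W = "du_dx m F" and ?Su = "S_u_expl m q F" and ?Sx = "S_x_expl m p F"
  let ?a = "pconst (proj_coeff m p)"
  have FP: "F \<in> Ppq m p q" and lx: "lap_x m F = 0" using F by (auto simp: Harm_def)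
  have SuH: "?Su \<in> Harm m (p - 1) (q + 1)" by (rule S_u_expl_Harm[OF m F])
  have lSu: "lap_x m ?Su = 0" using SuH by (simp add: Harm_def)
  have lSx: "lap_x m ?Sx = 0" using S_x_expl_Harm[OF m F] by (simp add: Harm_def)
  have lW: "lap_x m ?W = 0" using Harm_du_dx[OF F] by (simp add: Harm_def)
  have ESu: "euler_x m ?Su = (of_nat p - 1) * ?Su"
    by (rule euler_x_Ppq_pred) (use SuH FP in \<open>auto simp: Harm_def ops_deg0 S_u_expl_def\<close>)
  have "lap_x m (C_expl m p q F) = 2 * u_dx m F
     - ?a * (2 * of_nat m * ?Su + 4 * ((of_nat p - 1) * ?Su))
     - pconst (proj_coeff m p * proj_coeff m q)
       * (2 * of_nat m * (normu2 m * ?W) + 4 * (normu2 m * ((of_nat p - 1) * ?W)))"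
    by (simp add: C_expl_def ops_diff ops_pconst lap_x_ux lx lap_x_normx2 lap_x_normu2 lSu lSx lW
        ESu euler_x_du_dx[OF F] derivation_mult derivation_quadrics)
  also have "\<dots> = 2 * u_dx m F - (?a * (2 * of_nat m + 4 * (of_nat p - 1)))
     * (?Su + pconst (proj_coeff m q) * (normu2 m * ?W))"
    by (simp add: algebra_simps pconst_mult)
  also have "\<dots> = 0" unfolding proj_coeff_cancel[OF m] S_u_expl_def by (simp add: algebra_simps)
  finally show ?thesis .
qed

lemma lap_u_C_expl: assumes m: "m > 2" and F: "F \<in> Harm m p q"
  shows "lap_u m (C_expl m p q F) = 0"
proof -
  let ?W = "du_dx m F" and ?Su = "S_u_expl m q F" and ?Sx = "S_x_expl m p F"
  let ?b = "pconst (proj_coeff m q)"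
  have FP: "F \<in> Ppq m p q" and lu: "lap_u m F = 0" using F by (auto simp: Harm_def)
  have SxH: "?Sx \<in> Harm m (p + 1) (q - 1)" by (rule S_x_expl_Harm[OF m F])
  have lSx: "lap_u m ?Sx = 0" using SxH by (simp add: Harm_def)
  have lSu: "lap_u m ?Su = 0" using S_u_expl_Harm[OF m F] by (simp add: Harm_def)
  have lW: "lap_u m ?W = 0" using Harm_du_dx[OF F] by (simp add: Harm_def)
  have ESx: "euler_u m ?Sx = (of_nat q - 1) * ?Sx"
    by (rule euler_u_Ppq_pred) (use SxH FP in \<open>auto simp: Harm_def ops_deg0 S_x_expl_def\<close>)
  have "lap_u m (C_expl m p q F) = 2 * x_du m F
     - ?b * (2 * of_nat m * ?Sx + 4 * ((of_nat q - 1) * ?Sx))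
     - pconst (proj_coeff m p * proj_coeff m q)
       * (normx2 m * (2 * of_nat m * ?W + 4 * ((of_nat q - 1) * ?W)))"
    by (simp add: C_expl_def ops_diff ops_pconst lap_u_ux lu lap_u_normx2 lap_u_normu2 lSu lSx lW
        ESx euler_u_du_dx[OF F])
  also have "\<dots> = 2 * x_du m F - (?b * (2 * of_nat m + 4 * (of_nat q - 1)))
     * (?Sx + pconst (proj_coeff m p) * (normx2 m * ?W))"
    by (simp add: algebra_simps pconst_mult)
  also have "\<dots> = 0" unfolding proj_coeff_cancel[OF m] S_x_expl_def by (simp add: algebra_simps)
  finally show ?thesis .
qed

lemma C_expl_Harm: assumes "m > 2" and "F \<in> Harm m p q"
  shows "C_expl m p q F \<in> Harm m (p + 1) (q + 1)"
  using C_expl_Ppq[OF assms] lap_x_C_expl[OF assms] lap_u_C_expl[OF assms] by (simp add: Harm_def)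

lemma fischer_decomp_ux: assumes m: "m > 2" and F: "F \<in> Harm m p q"
  shows "fischer_decomp m (p + 1) (q + 1) (ux m * F) (C_expl m p q F)"
proof -
  let ?W = "du_dx m F" and ?Su = "S_u_expl m q F" and ?Sx = "S_x_expl m p F"
  have FP: "F \<in> Ppq m p q" using F by (auto simp: Harm_def)
  have WH: "?W \<in> Harm m (p - 1) (q - 1)" by (rule Harm_du_dx[OF F])
  have SuH: "?Su \<in> Harm m (p - 1) (q + 1)" by (rule S_u_expl_Harm[OF m F])
  have SxH: "?Sx \<in> Harm m (p + 1) (q - 1)" by (rule S_x_expl_Harm[OF m F])
  have p0: "p = 0 \<Longrightarrow> ?W = 0 \<and> ?Su = 0"
    using FP by (auto simp: ops_deg0 S_u_expl_def)
  have q0: "q = 0 \<Longrightarrow> ?W = 0 \<and> ?Sx = 0"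
    using FP by (auto simp: ops_deg0 S_x_expl_def)
  have d0: "fischer_decomp m (p + 1) (q + 1) (C_expl m p q F) (C_expl m p q F)" by (rule fischer_decomp_Harm[OF C_expl_Harm[OF m F]])
  have d1: "fischer_decomp m (p + 1) (q + 1) (normx2 m * (pconst (proj_coeff m p) * ?Su)) 0"
  proof (rule fischer_decomp_normx2)
    show "fischer_decomp m (p + 1 - 2) (q + 1) (pconst (proj_coeff m p) * ?Su) (pconst (proj_coeff m p) * ?Su)"
      using fischer_decomp_Harm[OF Harm_pconst[OF SuH]] by simp
    show "2 \<le> p + 1 \<or> pconst (proj_coeff m p) * ?Su = 0" using p0 by (cases p) auto
  qed
  have d2: "fischer_decomp m (p + 1) (q + 1) (normu2 m * (pconst (proj_coeff m q) * ?Sx)) 0"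
  proof (rule fischer_decomp_normu2)
    show "fischer_decomp m (p + 1) (q + 1 - 2) (pconst (proj_coeff m q) * ?Sx) (pconst (proj_coeff m q) * ?Sx)"
      using fischer_decomp_Harm[OF Harm_pconst[OF SxH]] by simp
    show "2 \<le> q + 1 \<or> pconst (proj_coeff m q) * ?Sx = 0" using q0 by (cases q) auto
  qed
  have d3: "fischer_decomp m (p + 1) (q + 1) (normx2 m * (normu2 m * (pconst (proj_coeff m p * proj_coeff m q) * ?W))) 0"
  proof (rule fischer_decomp_normx2)
    show "fischer_decomp m (p + 1 - 2) (q + 1) (normu2 m * (pconst (proj_coeff m p * proj_coeff m q) * ?W)) 0"
    proof (rule fischer_decomp_normu2)
      show "fischer_decomp m (p + 1 - 2) (q + 1 - 2) (pconst (proj_coeff m p * proj_coeff m q) * ?W) (pconst (proj_coeff m p * proj_coeff m q) * ?W)"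
        using fischer_decomp_Harm[OF Harm_pconst[OF WH]] by simp
      show "2 \<le> q + 1 \<or> pconst (proj_coeff m p * proj_coeff m q) * ?W = 0" using q0 by (cases q) auto
    qed
    show "2 \<le> p + 1 \<or> normu2 m * (pconst (proj_coeff m p * proj_coeff m q) * ?W) = 0" using p0 by (cases p) auto
  qed
  have "ux m * F = C_expl m p q F + normx2 m * (pconst (proj_coeff m p) * ?Su) + normu2 m * (pconst (proj_coeff m q) * ?Sx)
     + normx2 m * (normu2 m * (pconst (proj_coeff m p * proj_coeff m q) * ?W))"
    by (simp add: C_expl_def algebra_simps)
  then show ?thesis using fischer_decomp_add[OF fischer_decomp_add[OF fischer_decomp_add[OF d0 d1] d2] d3] by simp
qed

lemma C_Harm: assumes "m > 2" "F \<in> Harm m p q"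
  shows "C_op m F = C_expl m p q F" "C_op m F \<in> Harm m (p + 1) (q + 1)"
  using pi_s_fischer_decomp[OF fischer_decomp_ux[OF assms]] C_expl_Harm[OF assms] by (simp_all add: C_op_def)

lemma C_expl_zero[simp]: "C_expl m p q 0 = 0"
  by (simp add: C_expl_def S_u_expl_def S_x_expl_def)

lemma x_du_C_expl:
  "x_du m (C_expl m p q F) = pconst (1 - 2 * proj_coeff m q) * (ux m * S_x_expl m p F)
     + normx2 m * (F + pconst (- proj_coeff m p) * x_du m (S_u_expl m q F)
        + pconst (proj_coeff m p - 2 * proj_coeff m p * proj_coeff m q) * (ux m * du_dx m F)
        + pconst (- proj_coeff m p * proj_coeff m q) * (normu2 m * x_du m (du_dx m F)))
     + pconst (- proj_coeff m q) * (normu2 m * x_du m (S_x_expl m p F))"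
proof -
  have "x_du m F = S_x_expl m p F + pconst (proj_coeff m p) * (normx2 m * du_dx m F)"
    by (simp add: S_x_expl_def)
  then show ?thesis
    unfolding C_expl_def ops_diff ops_pconst x_du_ux x_du_normx2 x_du_normu2
    by (simp add: algebra_simps pconst_mult pconst_diff pconst_uminus pconst_numeral)
qed

lemma fischer_decomp_normu2_x_du: assumes m: "m > 2" and G: "G \<in> Harm m p q"
  shows "fischer_decomp m (p + 1) (q + 1) (normu2 m * x_du m G) 0"
proof (rule fischer_decomp_normu2)
  show "fischer_decomp m (p + 1) (q + 1 - 2) (x_du m G) (S_x_expl m p G)"
    using fischer_decomp_x_du[OF m G] by simp
  show "2 \<le> q + 1 \<or> x_du m G = 0"
    using G by (cases q) (auto simp: Harm_def ops_deg0)
qed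

text \<open>The factor of \<open>|x|^2\<close> in \<open>x_du_C_expl\<close>: only its bidegree matters, since after
  multiplication by \<open>|x|^2\<close> it does not contribute to \<open>pi_s\<close>.\<close>

lemma fischer_decomp_S_x_C_remainder: assumes m: "m > 2" and F: "F \<in> Harm m p q"
  shows "\<exists>H. fischer_decomp m p q (F + pconst a * x_du m (S_u_expl m q F) + pconst b * (ux m * du_dx m F)
      + pconst c * (normu2 m * x_du m (du_dx m F))) H"
proof -
  let ?W = "du_dx m F" and ?Su = "S_u_expl m q F"
  have WH: "?W \<in> Harm m (p - 1) (q - 1)" by (rule Harm_du_dx[OF F])
  have p0: "p = 0 \<Longrightarrow> ?W = 0 \<and> ?Su = 0" and q0: "q = 0 \<Longrightarrow> ?W = 0"
    using F by (auto simp: Harm_def ops_deg0 S_u_expl_def)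
  obtain H1 where t1: "fischer_decomp m p q (x_du m ?Su) H1"
  proof (cases p)
    case 0 then show ?thesis using p0 that[of 0] fischer_decomp_zero by auto
  next
    case (Suc p') then show ?thesis using that fischer_decomp_x_du[OF m S_u_expl_Harm[OF m F]] by simp
  qed
  obtain H2 where t2: "fischer_decomp m p q (ux m * ?W) H2"
  proof (cases "p = 0 \<or> q = 0")
    case True then show ?thesis using p0 q0 that[of 0] fischer_decomp_zero by auto
  next
    case False then show ?thesis using that fischer_decomp_ux[OF m WH] by simp
  qed
  have t3: "fischer_decomp m p q (normu2 m * x_du m ?W) 0"
  proof (cases "p = 0 \<or> q = 0")
    case True then show ?thesis using p0 q0 fischer_decomp_zero by auto
  next
    case False then show ?thesis using fischer_decomp_normu2_x_du[OF m WH] by simp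
  qed
  show ?thesis
    using fischer_decomp_add[OF fischer_decomp_add[OF fischer_decomp_add[OF fischer_decomp_Harm[OF F] fischer_decomp_pconst[OF t1]]
        fischer_decomp_pconst[OF t2]] fischer_decomp_pconst[OF t3]] by blast
qed

lemma S_x_C_commute: assumes m: "m > 2" and F: "F \<in> Harm m p q"
  shows "S_x m (C_op m F) = pconst (1 - 2 * proj_coeff m q) * C_op m (S_x m F)"
proof -
  let ?Sx = "S_x_expl m p F"
  have SxH: "?Sx \<in> Harm m (p + 1) (q - 1)" by (rule S_x_expl_Harm[OF m F])
  have q0: "q = 0 \<Longrightarrow> ?Sx = 0"
    using F by (auto simp: Harm_def ops_deg0 S_x_expl_def)
  obtain T H where T: "x_du m (C_expl m p q F) = pconst (1 - 2 * proj_coeff m q) * (ux m * ?Sx)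
      + normx2 m * T + pconst (- proj_coeff m q) * (normu2 m * x_du m ?Sx)"
    and dT: "fischer_decomp m p q T H"
    using x_du_C_expl fischer_decomp_S_x_C_remainder[OF m F] by blast
  have dA: "fischer_decomp m (p + 2) q (ux m * ?Sx) (C_expl m (p + 1) (q - 1) ?Sx)"
    using q0 fischer_decomp_ux[OF m SxH] fischer_decomp_zero by (cases q) simp_all
  have dB: "fischer_decomp m (p + 2) q (normx2 m * T) 0"
    by (rule fischer_decomp_normx2) (use dT in simp_all)
  have dC: "fischer_decomp m (p + 2) q (normu2 m * x_du m ?Sx) 0"
    using q0 fischer_decomp_normu2_x_du[OF m SxH] fischer_decomp_zero by (cases q) simp_all
  have "fischer_decomp m (p + 2) q (x_du m (C_expl m p q F))
      (pconst (1 - 2 * proj_coeff m q) * C_expl m (p + 1) (q - 1) ?Sx)"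
    unfolding T using fischer_decomp_add[OF fischer_decomp_add[OF fischer_decomp_pconst[OF dA] dB] fischer_decomp_pconst[OF dC]] by simp
  then have "S_x m (C_op m F) = pconst (1 - 2 * proj_coeff m q) * C_expl m (p + 1) (q - 1) ?Sx"
    using pi_s_fischer_decomp C_Harm(1)[OF m F] by (simp add: S_x_def)
  also have "C_expl m (p + 1) (q - 1) ?Sx = C_op m (S_x m F)"
    using C_Harm(1)[OF m SxH] S_x_Harm(1)[OF m F] by simp
  finally show ?thesis .
qed

section \<open>Moving \<open>S_x\<close> past powers of \<open>C\<close>\<close>

lemma S_x_pconst: assumes "m > 2" "G \<in> Harm m p q" shows "S_x m (pconst c * G) = pconst c * S_x m G"
proof -
  have "S_x_expl m p (pconst c * G) = pconst c * S_x_expl m p G"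
    by (simp add: S_x_expl_def ops_pconst right_diff_distrib mult.left_commute)
  then show ?thesis using S_x_Harm(1)[OF assms(1) Harm_pconst[OF assms(2)]] S_x_Harm(1)[OF assms] by simp
qed

lemma C_pconst: assumes "m > 2" "G \<in> Harm m p q" shows "C_op m (pconst c * G) = pconst c * C_op m G"
proof -
  have "S_x_expl m p (pconst c * G) = pconst c * S_x_expl m p G"
    by (simp add: S_x_expl_def ops_pconst right_diff_distrib mult.left_commute)
  moreover have "S_u_expl m q (pconst c * G) = pconst c * S_u_expl m q G"
    by (simp add: S_u_expl_def ops_pconst right_diff_distrib mult.left_commute)
  ultimately have "C_expl m p q (pconst c * G) = pconst c * C_expl m p q G"
    by (simp add: C_expl_def ops_pconst right_diff_distrib mult.left_commute)
  then show ?thesis using C_Harm(1)[OF assms(1) Harm_pconst[OF assms(2)]] C_Harm(1)[OF assms] by simp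
qed

lemma C_pow_Harm: assumes "m > 2" "G \<in> Harm m p q" shows "(C_op m ^^ i) G \<in> Harm m (p + i) (q + i)"
proof (induction i)
  case (Suc i)
  then show ?case using C_Harm(2)[OF assms(1) Suc] by simp
qed (simp add: assms)

lemma C_pow_pconst: assumes "m > 2" "G \<in> Harm m p q" shows "(C_op m ^^ i) (pconst c * G) = pconst c * (C_op m ^^ i) G"
  by (induction i) (auto simp: C_pconst[OF assms(1) C_pow_Harm[OF assms]])

lemma S_x_pow_Harm: assumes "m > 2" "G \<in> Harm m p q" shows "(S_x m ^^ t) G \<in> Harm m (p + t) (q - t)"
proof (induction t)
  case (Suc t)
  have "q - t - 1 = q - Suc t" by simp
  then show ?case using S_x_Harm(2)[OF assms(1) Suc] by simp
qed (simp add: assms)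

definition S_x_C_pow_factor :: "nat \<Rightarrow> nat \<Rightarrow> nat \<Rightarrow> complex" where "S_x_C_pow_factor m q i = (\<Prod>t<i. 1 - 2 * proj_coeff m (q + t))"

lemma S_x_C_pow: assumes m: "m > 2" and F: "F \<in> Harm m p q"
  shows "S_x m ((C_op m ^^ i) F) = pconst (S_x_C_pow_factor m q i) * (C_op m ^^ i) (S_x m F)"
proof (induction i)
  case 0 then show ?case by (simp add: S_x_C_pow_factor_def)
next
  case (Suc i)
  have "S_x m ((C_op m ^^ Suc i) F) = pconst (1 - 2 * proj_coeff m (q + i)) * C_op m (S_x m ((C_op m ^^ i) F))"
    using S_x_C_commute[OF m C_pow_Harm[OF m F, of i]] by simp
  also have "\<dots> = pconst (1 - 2 * proj_coeff m (q + i)) * (pconst (S_x_C_pow_factor m q i) * C_op m ((C_op m ^^ i) (S_x m F)))"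
    unfolding Suc C_pconst[OF m C_pow_Harm[OF m S_x_Harm(2)[OF m F]]] ..
  also have "\<dots> = pconst (S_x_C_pow_factor m q (Suc i)) * (C_op m ^^ Suc i) (S_x m F)"
    by (simp add: S_x_C_pow_factor_def pconst_mult mult_ac)
  finally show ?case .
qed

lemma S_x_pow_C_pow: assumes m: "m > 2" and F: "F \<in> Harm m p q"
  shows "(S_x m ^^ t) ((C_op m ^^ i) F) = pconst (\<Prod>s<t. S_x_C_pow_factor m (q - s) i) * (C_op m ^^ i) ((S_x m ^^ t) F)"
proof (induction t)
  case 0 then show ?case by simp
next
  case (Suc t)
  have H1: "(S_x m ^^ t) F \<in> Harm m (p + t) (q - t)" by (rule S_x_pow_Harm[OF m F])
  have "(S_x m ^^ Suc t) ((C_op m ^^ i) F) = S_x m (pconst (\<Prod>s<t. S_x_C_pow_factor m (q - s) i) * (C_op m ^^ i) ((S_x m ^^ t) F))"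
    using Suc by simp
  also have "\<dots> = pconst (\<Prod>s<t. S_x_C_pow_factor m (q - s) i) * S_x m ((C_op m ^^ i) ((S_x m ^^ t) F))"
    by (rule S_x_pconst[OF m C_pow_Harm[OF m H1]])
  also have "\<dots> = pconst (\<Prod>s<t. S_x_C_pow_factor m (q - s) i) * (pconst (S_x_C_pow_factor m (q - t) i) * (C_op m ^^ i) ((S_x m ^^ Suc t) F))"
    using S_x_C_pow[OF m H1] by simp
  also have "\<dots> = pconst (\<Prod>s<Suc t. S_x_C_pow_factor m (q - s) i) * (C_op m ^^ i) ((S_x m ^^ Suc t) F)"
    by (simp add: pconst_mult mult_ac)
  finally show ?case .
qed

section \<open>The operators on \<open>Hkl\<close>\<close>

lemma u_dx_pow_Hkl: assumes H: "H \<in> Hkl m k l"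
  shows "(u_dx m ^^ a) H \<in> Harm m (k - a) (l + a) \<and> du_dx m ((u_dx m ^^ a) H) = 0"
proof (induction a)
  case 0 then show ?case using H by (simp add: Hkl_def Harm_def)
next
  case (Suc a)
  let ?G = "(u_dx m ^^ a) H"
  have P: "?G \<in> Ppq m (k - a) (l + a)" and lx: "lap_x m ?G = 0" and lu: "lap_u m ?G = 0" and d: "du_dx m ?G = 0"
    using Suc by (auto simp: Harm_def)
  have "u_dx m ?G \<in> Ppq m (k - Suc a) (l + Suc a)" using Ppq_ops(1)[OF P] by simp
  then show ?case using lx lu d by (simp add: Harm_def lap_x_u_dx lap_u_u_dx du_dx_u_dx)
qed

lemma S_u_pow_Hkl: assumes m: "m > 2" and H: "H \<in> Hkl m k l"
  shows "(S_u m ^^ a) H = (u_dx m ^^ a) H"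
proof (induction a)
  case (Suc a)
  have h: "(u_dx m ^^ a) H \<in> Harm m (k - a) (l + a)" and d: "du_dx m ((u_dx m ^^ a) H) = 0"
    using u_dx_pow_Hkl[OF H] by auto
  show ?case using Suc S_u_Harm(1)[OF m h] d by (simp add: S_u_expl_def)
qed simp

lemma u_dx_pow_vanish: assumes H: "H \<in> Hkl m k l" and "a > k" shows "(u_dx m ^^ a) H = 0"
  using assms(2)
proof (induction a)
  case (Suc a)
  show ?case
  proof (cases "a = k")
    case True
    have "(u_dx m ^^ a) H \<in> Ppq m 0 (l + a)" using u_dx_pow_Hkl[OF H, of a] True by (simp add: Harm_def)
    then show ?thesis by (simp add: ops_deg0)
  next
    case False then show ?thesis using Suc by simp
  qed
qed simp

lemma euler_x_u_dx_pow: assumes H: "H \<in> Hkl m k l"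
  shows "euler_x m ((u_dx m ^^ a) H) = (of_nat k - of_nat a) * (u_dx m ^^ a) H"
proof (cases "a \<le> k")
  case True
  have "(u_dx m ^^ a) H \<in> Ppq m (k - a) (l + a)" using u_dx_pow_Hkl[OF H, of a] by (simp add: Harm_def)
  then show ?thesis using True by (simp add: euler_x_Ppq of_nat_diff)
next
  case False then show ?thesis using u_dx_pow_vanish[OF H, of a] by simp
qed

lemma euler_u_u_dx_pow: assumes H: "H \<in> Hkl m k l"
  shows "euler_u m ((u_dx m ^^ a) H) = of_nat (l + a) * (u_dx m ^^ a) H"
proof -
  have "(u_dx m ^^ a) H \<in> Ppq m (k - a) (l + a)" using u_dx_pow_Hkl[OF H, of a] by (simp add: Harm_def)
  then show ?thesis by (rule euler_u_Ppq)
qed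

lemma x_du_u_dx_pow: assumes H: "H \<in> Hkl m k l"
  shows "x_du m ((u_dx m ^^ Suc a) H) = pconst ((of_nat a + 1) * (of_nat k - of_nat l - of_nat a)) * (u_dx m ^^ a) H"
proof (induction a)
  case 0
  have "x_du m H = 0" using H by (simp add: Hkl_def)
  then show ?case using x_du_u_dx[of m H] euler_x_u_dx_pow[OF H, of 0] euler_u_u_dx_pow[OF H, of 0]
    by (simp add: pconst_diff pconst_of_nat algebra_simps)
next
  case (Suc a)
  let ?G = "(u_dx m ^^ Suc a) H"
  have "x_du m ((u_dx m ^^ Suc (Suc a)) H) = euler_x m ?G - euler_u m ?G + u_dx m (x_du m ?G)"
    by (simp add: x_du_u_dx)
  also have "\<dots> = (of_nat k - of_nat (Suc a)) * ?G - of_nat (l + Suc a) * ?G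
      + pconst ((of_nat a + 1) * (of_nat k - of_nat l - of_nat a)) * ?G"
    by (simp only: euler_x_u_dx_pow[OF H] euler_u_u_dx_pow[OF H] Suc ops_pconst) simp
  also have "\<dots> = pconst ((of_nat (Suc a) + 1) * (of_nat k - of_nat l - of_nat (Suc a))) * ?G"
    by (simp add: pconst_mult pconst_diff pconst_add pconst_of_nat pconst_numeral algebra_simps)
  finally show ?case .
qed

definition sl2_coeff :: "nat \<Rightarrow> nat \<Rightarrow> nat \<Rightarrow> complex" where
  "sl2_coeff k l a = (of_nat a + 1) * (of_nat k - of_nat l - of_nat a)"

lemma S_x_u_dx_pow: assumes m: "m > 2" and H: "H \<in> Hkl m k l"
  shows "S_x m ((u_dx m ^^ b) H) = x_du m ((u_dx m ^^ b) H)"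
proof -
  have h: "(u_dx m ^^ b) H \<in> Harm m (k - b) (l + b)" and d: "du_dx m ((u_dx m ^^ b) H) = 0"
    using u_dx_pow_Hkl[OF H] by auto
  show ?thesis using S_x_Harm(1)[OF m h] d by (simp add: S_x_expl_def)
qed

lemma S_x_pow_u_dx_pow: assumes m: "m > 2" and H: "H \<in> Hkl m k l"
  shows "t \<le> j \<Longrightarrow> (S_x m ^^ t) ((u_dx m ^^ j) H) = pconst (\<Prod>s<t. sl2_coeff k l (j - Suc s)) * (u_dx m ^^ (j - t)) H"
proof (induction t)
  case 0 then show ?case by simp
next
  case (Suc t)
  have h: "(u_dx m ^^ (j - t)) H \<in> Harm m (k - (j - t)) (l + (j - t))"
    using u_dx_pow_Hkl[OF H] by auto
  have jt: "j - t = Suc (j - Suc t)" using Suc.prems by simp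
  have "(S_x m ^^ Suc t) ((u_dx m ^^ j) H) = S_x m (pconst (\<Prod>s<t. sl2_coeff k l (j - Suc s)) * (u_dx m ^^ (j - t)) H)"
    using Suc by simp
  also have "\<dots> = pconst (\<Prod>s<t. sl2_coeff k l (j - Suc s)) * x_du m ((u_dx m ^^ (j - t)) H)"
    by (simp only: S_x_pconst[OF m h] S_x_u_dx_pow[OF m H])
  also have "\<dots> = pconst (\<Prod>s<t. sl2_coeff k l (j - Suc s)) * x_du m ((u_dx m ^^ Suc (j - Suc t)) H)"
    by (simp only: jt)
  also have "\<dots> = pconst (\<Prod>s<Suc t. sl2_coeff k l (j - Suc s)) * (u_dx m ^^ (j - Suc t)) H"
    unfolding x_du_u_dx_pow[OF H] by (simp add: sl2_coeff_def pconst_mult mult_ac)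
  finally show ?case .
qed

section \<open>Evaluation of the scalar factors\<close>

lemma prod_diff_pochhammer: "(\<Prod>a<j. x - of_nat a) = pochhammer (x - of_nat j + 1) j" for x :: complex
proof (induction j)
  case (Suc j)
  have "pochhammer (x - of_nat (Suc j) + 1) (Suc j) = (x - of_nat j) * pochhammer (x - of_nat j + 1) j"
    by (simp add: pochhammer_rec algebra_simps)
  then show ?case using Suc by (simp add: algebra_simps)
qed simp

lemma prod_Suc_fact: "(\<Prod>a<j. (of_nat a + 1 :: complex)) = fact j"
  by (induction j) (simp_all add: algebra_simps)

lemma prod_sl2_coeff: "(\<Prod>s<j. sl2_coeff k l (j - Suc s)) = fact j * pochhammer (of_int (int k - int l - int j + 1)) j"
proof -
  have "(\<Prod>s<j. sl2_coeff k l (j - Suc s)) = (\<Prod>a<j. sl2_coeff k l a)"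
    by (rule prod.nat_diff_reindex)
  also have "\<dots> = (\<Prod>a<j. of_nat a + 1) * (\<Prod>a<j. (of_nat k - of_nat l) - of_nat a)"
    by (simp add: sl2_coeff_def prod.distrib)
  also have "\<dots> = fact j * pochhammer (of_int (int k - int l - int j + 1)) j"
    by (simp add: prod_Suc_fact prod_diff_pochhammer)
  finally show ?thesis .
qed

lemma half_dim_shift_nonzero: assumes "m > 4" shows "(of_nat n + of_nat m / 2 - 2 :: complex) \<noteq> 0"
proof
  assume "(of_nat n + of_nat m / 2 - 2 :: complex) = 0"
  then have "(of_nat (2 * n + m) :: complex) = of_nat 4" by (simp add: field_simps)
  then have "2 * n + m = 4" using of_nat_eq_iff by blast
  then show False using assms by simp
qed

lemma one_minus_2_proj_coeff: assumes m: "m > 2"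
  shows "1 - 2 * proj_coeff m n = (of_nat n + of_nat m / 2 - 2) / (of_nat n + of_nat m / 2 - 1)"
proof -
  define x where "x = (of_nat n + of_nat m / 2 - 1 :: complex)"
  have "2 * x = of_nat (2 * n + m) - 2" by (simp add: x_def algebra_simps)
  moreover have "(of_nat (2 * n + m) :: complex) \<noteq> 2"
    using m of_nat_eq_iff[of "2 * n + m" 2] by simp
  ultimately have x0: "x \<noteq> 0" by auto
  have "proj_coeff m n = 1 / (2 * x)" unfolding proj_coeff_def x_def by (simp add: algebra_simps)
  then have "1 - 2 * proj_coeff m n = (x - 1) / x" using x0 by (simp add: field_simps)
  then show ?thesis by (simp add: x_def)
qed

lemma S_x_C_pow_factor_eq: assumes m: "m > 4"
  shows "S_x_C_pow_factor m q i = (of_nat q + of_nat m / 2 - 2) / (of_nat q + of_nat i + of_nat m / 2 - 2)"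
proof (induction i)
  case 0 then show ?case using half_dim_shift_nonzero[OF m, of q] by (simp add: S_x_C_pow_factor_def)
next
  case (Suc i)
  have "S_x_C_pow_factor m q (Suc i) = S_x_C_pow_factor m q i * (1 - 2 * proj_coeff m (q + i))"
    by (simp add: S_x_C_pow_factor_def)
  also have "\<dots> = (of_nat q + of_nat m / 2 - 2) / (of_nat (q + i) + of_nat m / 2 - 2)
     * ((of_nat (q + i) + of_nat m / 2 - 2) / (of_nat (q + i) + of_nat m / 2 - 1))"
    using m by (simp add: Suc one_minus_2_proj_coeff)
  also have "\<dots> = (of_nat q + of_nat m / 2 - 2) / (of_nat (q + i) + of_nat m / 2 - 1)"
    using half_dim_shift_nonzero[OF m, of "q + i"] by simp
  also have "\<dots> = (of_nat q + of_nat m / 2 - 2) / (of_nat q + of_nat (Suc i) + of_nat m / 2 - 2)"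
    by (simp add: algebra_simps)
  finally show ?case .
qed

lemma prod_S_x_C_pow_factor: assumes m: "m > 4"
  shows "(\<Prod>s<j. S_x_C_pow_factor m (l + j - s) i) = pochhammer (of_nat l + of_nat m / 2 - 1) j / pochhammer (of_nat (l + i) + of_nat m / 2 - 1) j"
proof -
  have "(\<Prod>s<j. S_x_C_pow_factor m (l + j - s) i) = (\<Prod>s<j. S_x_C_pow_factor m (l + (j - Suc s) + 1) i)"
  proof (rule prod.cong[OF refl])
    fix s assume "s \<in> {..<j}"
    then have "l + j - s = l + (j - Suc s) + 1" by auto
    then show "S_x_C_pow_factor m (l + j - s) i = S_x_C_pow_factor m (l + (j - Suc s) + 1) i" by (simp only:)
  qed
  also have "\<dots> = (\<Prod>a<j. S_x_C_pow_factor m (l + a + 1) i)"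
    by (rule prod.nat_diff_reindex)
  also have "\<dots> = (\<Prod>a<j. (of_nat l + of_nat m / 2 - 1 + of_nat a) / (of_nat (l + i) + of_nat m / 2 - 1 + of_nat a))"
    by (rule prod.cong) (simp_all add: S_x_C_pow_factor_eq[OF m] algebra_simps)
  also have "\<dots> = pochhammer (of_nat l + of_nat m / 2 - 1) j / pochhammer (of_nat (l + i) + of_nat m / 2 - 1) j"
    by (simp add: prod_dividef pochhammer_prod atLeast0LessThan)
  finally show ?thesis .
qed

theorem lemma4p2:
  fixes m k l i j :: nat and H :: cpoly
  assumes "m > 4" and "l \<le> k" and "H \<in> Hkl m k l"
  shows "(S_x m ^^ j) ((C_op m ^^ i) ((S_u m ^^ j) H)) =
    pconst (of_nat (fact j) * pochhammer (of_int (int k - int l - int j + 1)) j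
       * pochhammer (of_nat l + of_nat m / 2 - 1) j
       / pochhammer (of_nat (l + i) + of_nat m / 2 - 1) j)
    * (C_op m ^^ i) H"
proof -
  have m: "m > 2" using assms(1) by simp
  have H: "H \<in> Hkl m k l" by fact
  have HH: "H \<in> Harm m k l" using H by (simp add: Hkl_def Harm_def)
  have Gj: "(u_dx m ^^ j) H \<in> Harm m (k - j) (l + j)" using u_dx_pow_Hkl[OF H] by auto
  have "(S_x m ^^ j) ((C_op m ^^ i) ((S_u m ^^ j) H)) = (S_x m ^^ j) ((C_op m ^^ i) ((u_dx m ^^ j) H))"
    by (simp add: S_u_pow_Hkl[OF m H])
  also have "\<dots> = pconst (\<Prod>s<j. S_x_C_pow_factor m (l + j - s) i) * (C_op m ^^ i) ((S_x m ^^ j) ((u_dx m ^^ j) H))"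
    by (rule S_x_pow_C_pow[OF m Gj])
  also have "\<dots> = pconst (\<Prod>s<j. S_x_C_pow_factor m (l + j - s) i) * (C_op m ^^ i) (pconst (\<Prod>s<j. sl2_coeff k l (j - Suc s)) * H)"
    using S_x_pow_u_dx_pow[OF m H, of j j] by simp
  also have "\<dots> = pconst (\<Prod>s<j. S_x_C_pow_factor m (l + j - s) i) * (pconst (\<Prod>s<j. sl2_coeff k l (j - Suc s)) * (C_op m ^^ i) H)"
    by (simp add: C_pow_pconst[OF m HH])
  also have "\<dots> = pconst (of_nat (fact j) * pochhammer (of_int (int k - int l - int j + 1)) j
       * pochhammer (of_nat l + of_nat m / 2 - 1) j
       / pochhammer (of_nat (l + i) + of_nat m / 2 - 1) j) * (C_op m ^^ i) H"
    by (simp add: prod_S_x_C_pow_factor[OF assms(1)] prod_sl2_coeff pconst_mult[symmetric] mult_ac)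
  finally show ?thesis .
qed

end
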